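(* Let $p,q$ be odd primes with $q-p=2$, let $K=\mathbb{Q}(\sqrt{-7})$, and assume $p$ and $q$ are both inert in $K$. Let $E'=E'_+: y^2=x^3-2(p+q)x^2+4x$ and $\pi_2=-\frac{1+\sqrt{-7}}{2}$, $\overline{\pi_2}=\frac{-1+\sqrt{-7}}{2}$. Then: (1) if $d\in K(S,2)$ satisfies $\pi_2\mid d$ or $\overline{\pi_2}\mid d$, then $d\notin S^{(\widehat\varphi)}(E'/K)$; (2) $-p,-q\in S^{(\widehat\varphi)}(E'/K)$; (3) $-1\in S^{(\widehat\varphi)}(E'/K)$ iff $p\equiv 3,17,31\pmod{56}$.
   Context: Let $E=E_+: y^2=x(x+p)(x+q)$ and $\widehat\varphi:E'\to E$, $(x,y)\mapsto(y^2/(4x^2), y(4-x^2)/(8x^2))$, the dual of the 2-isogeny $\varphi:E\to E'$, $(x,y)\mapsto(y^2/x^2,y(pq-x^2)/x^2)$. Let $S=\{\infty\}\cup\{$primes of $K$ dividing $2pq\}$ and $K(S,2)=\{d\in K^*/K^{*2}:\ \mathrm{ord}_v(d)$ even for all $v\notin S\}=\langle -1,\pi_2,\overline{\pi_2},p,q\rangle$. The $\widehat\varphi$-Selmer group is identified with $S^{(\widehat\varphi)}(E'/K)=\{d\in K(S,2): C'_d(K_v)\neq\emptyset$ for all $v\in S\}$, where $C'_d: dw^2=d^2+(p+q)dz^2+pqz^4$. "$\pi\mid d$" means $\mathrm{ord}_\pi(d)$ is odd. *)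

theory Defs
  imports Complex_Main "HOL-Computational_Algebra.Primes"
begin

definition sqrtm7 :: complex where
  "sqrtm7 = \<i> * complex_of_real (sqrt 7)"

definition KK :: "complex set" where
  "KK = {complex_of_real (of_rat a) + complex_of_real (of_rat b) * sqrtm7 | a b. True}"

definition OK :: "complex set" where
  "OK = {of_int a + of_int b * ((1 + sqrtm7) / 2) | a b. True}"

definition pi2 :: complex where "pi2 = - (1 + sqrtm7) / 2"
definition pi2bar :: complex where "pi2bar = (-1 + sqrtm7) / 2"

definition OK_dvd :: "complex \<Rightarrow> complex \<Rightarrow> bool" where
  "OK_dvd a b \<longleftrightarrow> (\<exists>c\<in>OK. b = a * c)"

text \<open>A prime element of O_K; a rational prime p is inert in K iff p is a prime element of O_K.\<close>
definition OK_prime :: "complex \<Rightarrow> bool" where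
  "OK_prime x \<longleftrightarrow> x \<in> OK \<and> x \<noteq> 0 \<and> \<not> (\<exists>u\<in>OK. x * u = 1) \<and>
     (\<forall>a\<in>OK. \<forall>b\<in>OK. OK_dvd x (a * b) \<longrightarrow> OK_dvd x a \<or> OK_dvd x b)"

definition inert_in_K :: "nat \<Rightarrow> bool" where
  "inert_in_K p \<longleftrightarrow> OK_prime (of_nat p)"

definition kord :: "complex \<Rightarrow> complex \<Rightarrow> int" where
  "kord \<pi> x = (THE n. \<exists>a\<in>OK. \<exists>b\<in>OK. \<not> OK_dvd \<pi> a \<and> \<not> OK_dvd \<pi> b \<and>
                        x * b = \<pi> powi n * a)"

text \<open>"pi-adic valuation of x is at least N" (true for x = 0).\<close>
definition vge :: "complex \<Rightarrow> nat \<Rightarrow> complex \<Rightarrow> bool" where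
  "vge \<pi> N x \<longleftrightarrow> (\<exists>a\<in>OK. \<exists>b\<in>OK. \<not> OK_dvd \<pi> b \<and> x * b = \<pi> ^ N * a)"

definition adic_cauchy :: "complex \<Rightarrow> (nat \<Rightarrow> complex) \<Rightarrow> bool" where
  "adic_cauchy \<pi> w \<longleftrightarrow> (\<forall>N. \<exists>M. \<forall>m\<ge>M. \<forall>n\<ge>M. vge \<pi> N (w m - w n))"

definition adic_null :: "complex \<Rightarrow> (nat \<Rightarrow> complex) \<Rightarrow> bool" where
  "adic_null \<pi> f \<longleftrightarrow> (\<forall>N. \<exists>M. \<forall>n\<ge>M. vge \<pi> N (f n))"

definition Cd :: "nat \<Rightarrow> nat \<Rightarrow> complex \<Rightarrow> complex \<Rightarrow> complex \<Rightarrow> complex" where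
  "Cd p q d w z = d * w^2 - (d^2 + (of_nat p + of_nat q) * d * z^2 + of_nat p * of_nat q * z^4)"

text \<open>C'_d(K_v) nonempty for the finite place v = (pi): a point of C'_d over the completion K_v,
  i.e. pi-adically Cauchy sequences in K (elements of K_v) on which F tends to 0.\<close>
definition loc_solv :: "complex \<Rightarrow> nat \<Rightarrow> nat \<Rightarrow> complex \<Rightarrow> bool" where
  "loc_solv \<pi> p q d \<longleftrightarrow> (\<exists>w z. (\<forall>n. w n \<in> KK \<and> z n \<in> KK) \<and>
      adic_cauchy \<pi> w \<and> adic_cauchy \<pi> z \<and> adic_null \<pi> (\<lambda>n. Cd p q d (w n) (z n)))"

text \<open>Infinite place: K_infinity = C.\<close>
definition arch_solv :: "nat \<Rightarrow> nat \<Rightarrow> complex \<Rightarrow> bool" where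
  "arch_solv p q d \<longleftrightarrow> (\<exists>w z :: complex. Cd p q d w z = 0)"

text \<open>K(S,2) = <-1, pi2, pi2bar, p, q> (representatives).\<close>
definition KS2 :: "nat \<Rightarrow> nat \<Rightarrow> complex set" where
  "KS2 p q = {(-1) ^ a * pi2 ^ b * pi2bar ^ c * of_nat p ^ e * of_nat q ^ f | a b c e f. True}"

text \<open>S = {infinity, pi2, pi2bar, p, q} when p, q are inert.\<close>
definition Selmer :: "nat \<Rightarrow> nat \<Rightarrow> complex set" where
  "Selmer p q = {d \<in> KS2 p q. arch_solv p q d \<and> loc_solv pi2 p q d \<and> loc_solv pi2bar p q d
                   \<and> loc_solv (of_nat p) p q d \<and> loc_solv (of_nat q) p q d}"

end

theory Submission
  imports Defs "HOL-Number_Theory.Number_Theory"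
begin

text \<open>All local conditions are read off from \<open>\<pi>\<close>-adic valuations in \<open>K\<close>, where
  \<open>2 = \<pi>\<^sub>2 \<pi>\<^sub>2'\<close> splits, so both dyadic completions are \<open>\<rat>\<^sub>2\<close>.
  (1) Write \<open>d w\<^sup>2 = (d + p z\<^sup>2)(d + q z\<^sup>2)\<close> up to a \<open>\<pi>\<^sub>2\<close>-adically small error: as \<open>p, q\<close> are
  \<open>\<pi>\<^sub>2\<close>-units, both factors have valuation \<open>min(ord d, 2 ord z)\<close>, so the right side has even
  valuation and \<open>ord d\<close> cannot be odd.
  (2) \<open>(w, z) = (0, 1)\<close> is a global point on \<open>C'\<^sub>-\<^sub>p\<close> and \<open>C'\<^sub>-\<^sub>q\<close>.
  (3) For \<open>d = -1\<close>: at an inert prime \<open>p\<close>, \<open>-7\<close> is a non-residue mod \<open>p\<close>, so \<open>-1\<close> or \<open>7\<close> is a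
  residue and Hensel's lemma gives \<open>w\<^sup>2 = -1\<close>. At the dyadic places a point exists iff
  \<open>p \<not>\<equiv> 5 (mod 8)\<close>: for \<open>p \<equiv> 1, 3, 7\<close> Hensel's lemma produces one, while for \<open>p \<equiv> 5\<close> every
  candidate contradicts the fact that unit squares of \<open>\<rat>\<^sub>2\<close> are \<open>\<equiv> 1 (mod 8)\<close>. Finally, by
  quadratic reciprocity inertness of \<open>p\<close> and \<open>p + 2\<close> forces \<open>p \<equiv> 3 (mod 7)\<close>, turning
  \<open>p \<not>\<equiv> 5 (mod 8)\<close> into \<open>p \<equiv> 3, 17, 31 (mod 56)\<close>.\<close>

section \<open>Arithmetic of \<open>K = \<rat>(\<surd>-7)\<close> and its ring of integers\<close>

definition omega7 :: complex where "omega7 = (1 + sqrtm7) / 2"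

lemma sqrtm7_mult_self: "sqrtm7 * sqrtm7 = -7"
proof -
  have "complex_of_real (sqrt 7) * complex_of_real (sqrt 7) = 7"
    by (simp flip: of_real_mult)
  then show ?thesis by (simp add: sqrtm7_def algebra_simps)
qed

lemma sqrtm7_nonzero: "sqrtm7 \<noteq> 0"
  using sqrtm7_mult_self by auto

lemma omega7_mult_self: "omega7 * omega7 = omega7 - 2"
  unfolding omega7_def by (simp add: field_simps sqrtm7_mult_self)

lemma Re_sqrtm7 [simp]: "Re sqrtm7 = 0" and Im_sqrtm7 [simp]: "Im sqrtm7 = sqrt 7"
  by (simp_all add: sqrtm7_def)

lemma Re_omega7 [simp]: "Re omega7 = 1/2" and Im_omega7 [simp]: "Im omega7 = sqrt 7 / 2"
  by (simp_all add: omega7_def)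

lemma OK_iff: "x \<in> OK \<longleftrightarrow> (\<exists>a b::int. x = of_int a + of_int b * omega7)"
  unfolding OK_def omega7_def by auto

lemma OK_coeffs_unique:
  assumes "of_int a + of_int b * omega7 = of_int c + of_int d * omega7"
  shows "a = c \<and> b = d"
proof -
  have "b = d" using arg_cong[OF assms, of Im] by simp
  moreover have "Re (of_int a + of_int b * omega7) = Re (of_int c + of_int d * omega7)"
    using assms by simp
  ultimately show ?thesis by simp
qed

lemma OK_mult_coeffs:
  "(of_int a + of_int b * omega7) * (of_int c + of_int d * omega7)
     = of_int (a*c - 2*b*d) + of_int (a*d + b*c + b*d) * omega7"
proof -
  have "(of_int a + of_int b * omega7) * (of_int c + of_int d * omega7)
      = of_int a * of_int c + (of_int a * of_int d + of_int b * of_int c) * omega7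
        + of_int b * of_int d * (omega7 * omega7)"
    by (simp add: algebra_simps)
  also have "\<dots> = of_int (a*c - 2*b*d) + of_int (a*d + b*c + b*d) * omega7"
    unfolding omega7_mult_self by (simp add: algebra_simps)
  finally show ?thesis .
qed

lemma OK_of_int [simp]: "of_int a \<in> OK"
  unfolding OK_iff by (rule exI[of _ a], rule exI[of _ 0]) simp

lemma OK_of_nat [simp]: "of_nat a \<in> OK"
  using OK_of_int[of "int a"] by simp

lemma OK_0 [simp]: "0 \<in> OK" and OK_1 [simp]: "1 \<in> OK"
  using OK_of_int[of 0] OK_of_int[of 1] by simp_all

lemma OK_numeral [simp]: "numeral n \<in> OK"
  using OK_of_int[of "numeral n"] by simp

lemma OK_omega7 [simp]: "omega7 \<in> OK"
  unfolding OK_iff by (rule exI[of _ 0], rule exI[of _ 1]) simp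

lemma OK_add [simp]: "x \<in> OK \<Longrightarrow> y \<in> OK \<Longrightarrow> x + y \<in> OK"
proof -
  assume "x \<in> OK" "y \<in> OK"
  then obtain a b c d :: int where "x = of_int a + of_int b * omega7" "y = of_int c + of_int d * omega7"
    unfolding OK_iff by blast
  then have "x + y = of_int (a + c) + of_int (b + d) * omega7" by (simp add: algebra_simps)
  then show ?thesis unfolding OK_iff by blast
qed

lemma OK_uminus [simp]: "x \<in> OK \<Longrightarrow> - x \<in> OK"
proof -
  assume "x \<in> OK"
  then obtain a b :: int where "x = of_int a + of_int b * omega7" unfolding OK_iff by blast
  then have "- x = of_int (- a) + of_int (- b) * omega7" by simp
  then show ?thesis unfolding OK_iff by blast
qed

lemma OK_diff [simp]: "x \<in> OK \<Longrightarrow> y \<in> OK \<Longrightarrow> x - y \<in> OK"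
  using OK_add[of x "-y"] by simp

lemma OK_mult [simp]: "x \<in> OK \<Longrightarrow> y \<in> OK \<Longrightarrow> x * y \<in> OK"
  unfolding OK_iff using OK_mult_coeffs by blast

lemma OK_power [simp]: "x \<in> OK \<Longrightarrow> x ^ n \<in> OK"
  by (induction n) auto

lemma sqrtm7_eq: "sqrtm7 = 2 * omega7 - 1"
  unfolding omega7_def by (simp add: field_simps)

lemma OK_sqrtm7 [simp]: "sqrtm7 \<in> OK"
  unfolding sqrtm7_eq by simp

lemma pi2_eq: "pi2 = - omega7" and pi2bar_eq: "pi2bar = omega7 - 1"
  unfolding pi2_def pi2bar_def omega7_def by (simp_all add: field_simps)

lemma OK_pi2 [simp]: "pi2 \<in> OK" and OK_pi2bar [simp]: "pi2bar \<in> OK"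
  unfolding pi2_eq pi2bar_eq by simp_all

lemma pi2_mult_pi2bar: "pi2 * pi2bar = 2"
  unfolding pi2_eq pi2bar_eq using omega7_mult_self by (simp add: algebra_simps)

lemma cnj_OK: "x \<in> OK \<Longrightarrow> cnj x \<in> OK"
proof -
  assume "x \<in> OK"
  then obtain a b :: int where "x = of_int a + of_int b * omega7" unfolding OK_iff by blast
  moreover have "cnj omega7 = 1 - omega7" by (simp add: complex_eq_iff)
  ultimately have "cnj x = of_int a + of_int b * (1 - omega7)"
    by simp
  then have "cnj x = of_int (a + b) + of_int (- b) * omega7"
    by (simp add: algebra_simps)
  then show ?thesis unfolding OK_iff by blast
qed

lemma OK_norm_square_int: "x \<in> OK \<Longrightarrow> \<exists>n::int. (cmod x)^2 = of_int n"
proof -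
  assume "x \<in> OK"
  then obtain a b :: int where x: "x = of_int a + of_int b * omega7" unfolding OK_iff by blast
  have "(cmod x)^2 = (a + b/2)^2 + (b * sqrt 7 / 2)^2" unfolding x cmod_power2 by simp
  also have "\<dots> = of_int (a^2 + a*b + 2*b^2)"
    by (simp add: power2_eq_square field_simps)
  finally show ?thesis by blast
qed

lemma OK_norm_square_ge_1: "x \<in> OK \<Longrightarrow> x \<noteq> 0 \<Longrightarrow> (cmod x)^2 \<ge> 1"
proof -
  assume "x \<in> OK" "x \<noteq> 0"
  then obtain n::int where n: "(cmod x)^2 = of_int n" using OK_norm_square_int by blast
  have "(cmod x)^2 > 0" using \<open>x \<noteq> 0\<close> by simp
  then show ?thesis using n by simp
qed

lemma KK_iff: "x \<in> KK \<longleftrightarrow> (\<exists>a b::rat. x = of_real (of_rat a) + of_real (of_rat b) * sqrtm7)"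
  unfolding KK_def by auto

lemma KK_add [simp]: "x \<in> KK \<Longrightarrow> y \<in> KK \<Longrightarrow> x + y \<in> KK"
proof -
  assume "x \<in> KK" "y \<in> KK"
  then obtain a b c d :: rat where "x = of_real (of_rat a) + of_real (of_rat b) * sqrtm7"
    "y = of_real (of_rat c) + of_real (of_rat d) * sqrtm7" unfolding KK_iff by blast
  then have "x + y = of_real (of_rat (a + c)) + of_real (of_rat (b + d)) * sqrtm7"
    by (simp add: of_rat_add algebra_simps)
  then show ?thesis unfolding KK_iff by blast
qed

lemma KK_uminus [simp]: "x \<in> KK \<Longrightarrow> - x \<in> KK"
proof -
  assume "x \<in> KK"
  then obtain a b :: rat where "x = of_real (of_rat a) + of_real (of_rat b) * sqrtm7"
    unfolding KK_iff by blast
  then have "- x = of_real (of_rat (- a)) + of_real (of_rat (- b)) * sqrtm7"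
    by (simp add: of_rat_minus)
  then show ?thesis unfolding KK_iff by blast
qed

lemma KK_diff [simp]: "x \<in> KK \<Longrightarrow> y \<in> KK \<Longrightarrow> x - y \<in> KK"
  using KK_add[of x "-y"] by simp

lemma KK_mult [simp]: "x \<in> KK \<Longrightarrow> y \<in> KK \<Longrightarrow> x * y \<in> KK"
proof -
  assume "x \<in> KK" "y \<in> KK"
  then obtain a b c d :: rat where xy: "x = of_real (of_rat a) + of_real (of_rat b) * sqrtm7"
    "y = of_real (of_rat c) + of_real (of_rat d) * sqrtm7" unfolding KK_iff by blast
  have "x * y = of_real (of_rat a) * of_real (of_rat c) + (of_real (of_rat a) * of_real (of_rat d)
      + of_real (of_rat b) * of_real (of_rat c)) * sqrtm7
      + of_real (of_rat b) * of_real (of_rat d) * (sqrtm7 * sqrtm7)"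
    unfolding xy by (simp add: algebra_simps)
  also have "\<dots> = of_real (of_rat (a*c - 7*b*d)) + of_real (of_rat (a*d+b*c)) * sqrtm7"
    unfolding sqrtm7_mult_self by (simp add: of_rat_add of_rat_mult of_rat_diff algebra_simps)
  finally show ?thesis unfolding KK_iff by blast
qed

lemma KK_of_rat [simp]: "of_real (of_rat a) \<in> KK"
  unfolding KK_iff by (rule exI[of _ a], rule exI[of _ 0]) simp

lemma KK_sqrtm7 [simp]: "sqrtm7 \<in> KK"
  unfolding KK_iff by (rule exI[of _ 0], rule exI[of _ 1]) simp

lemma KK_of_int [simp]: "of_int a \<in> KK"
  using KK_of_rat[of "of_int a"] by simp

lemma KK_of_nat [simp]: "of_nat a \<in> KK"
  using KK_of_int[of "int a"] by simp

lemma KK_0 [simp]: "0 \<in> KK" and KK_1 [simp]: "1 \<in> KK"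
  using KK_of_int[of 0] KK_of_int[of 1] by simp_all

lemma KK_numeral [simp]: "numeral n \<in> KK"
  using KK_of_int[of "numeral n"] by simp

lemma KK_inverse [simp]: "x \<in> KK \<Longrightarrow> inverse x \<in> KK"
proof -
  assume "x \<in> KK"
  then obtain a b :: rat where x: "x = of_real (of_rat a) + of_real (of_rat b) * sqrtm7"
    unfolding KK_iff by blast
  define x' where "x' = of_real (of_rat a) - of_real (of_rat b) * sqrtm7"
  define n where "n = a*a + 7*b*b"
  have "x * x' = of_real (of_rat a) * of_real (of_rat a)
                 - of_real (of_rat b) * of_real (of_rat b) * (sqrtm7 * sqrtm7)"
    unfolding x x'_def by (simp add: algebra_simps)
  also have "\<dots> = of_real (of_rat n)"
    unfolding sqrtm7_mult_self n_def by (simp add: of_rat_add of_rat_mult algebra_simps)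
  finally have norm: "x * x' = of_real (of_rat n)" .
  have "inverse x = x' * of_real (of_rat (inverse n))" if "x \<noteq> 0"
  proof (rule inverse_unique)
    have "n \<noteq> 0"
    proof
      assume "n = 0"
      moreover have "a*a \<ge> 0" "b*b \<ge> 0" by simp_all
      ultimately have "a = 0 \<and> b = 0" unfolding n_def by (simp add: add_nonneg_eq_0_iff)
      then show False using that x by simp
    qed
    have "x * (x' * of_real (of_rat (inverse n))) = of_real (of_rat (n * inverse n))"
      using norm by (simp only: mult.assoc[symmetric] of_rat_mult of_real_mult)
    then show "x * (x' * of_real (of_rat (inverse n))) = 1"
      using \<open>n \<noteq> 0\<close> by simp
  qed
  moreover have "x' * of_real (of_rat (inverse n)) \<in> KK"
    unfolding x'_def by (intro KK_mult KK_diff KK_of_rat KK_sqrtm7)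
  ultimately show ?thesis
    by (metis KK_0 inverse_zero)
qed

lemma KK_divide [simp]: "x \<in> KK \<Longrightarrow> y \<in> KK \<Longrightarrow> x / y \<in> KK"
  by (simp add: divide_inverse)

lemma KK_power [simp]: "x \<in> KK \<Longrightarrow> x ^ n \<in> KK"
  by (induction n) simp_all

lemma OK_subset_KK: "x \<in> OK \<Longrightarrow> x \<in> KK"
proof -
  assume "x \<in> OK"
  then obtain a b :: int where "x = of_int a + of_int b * (1 + sqrtm7) / 2"
    unfolding OK_iff omega7_def by auto
  moreover have "of_int a + of_int b * (1 + sqrtm7) / 2 \<in> KK"
    by (intro KK_add KK_divide KK_mult) auto
  ultimately show ?thesis by simp
qed

lemma KK_eq_OK_div_int: "x \<in> KK \<Longrightarrow> \<exists>A\<in>OK. \<exists>m::int. m > 0 \<and> x = A / of_int m"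
proof -
  assume "x \<in> KK"
  then obtain a b :: rat where x: "x = of_real (of_rat a) + of_real (of_rat b) * sqrtm7"
    unfolding KK_iff by blast
  obtain n1 d1 where a: "a = Fract n1 d1" "d1 > 0" by (cases a) auto
  obtain n2 d2 where b: "b = Fract n2 d2" "d2 > 0" by (cases b) auto
  have ar: "of_real (of_rat a) = (of_int n1 / of_int d1 :: complex)"
    using a by (simp add: of_rat_rat)
  have br: "of_real (of_rat b) = (of_int n2 / of_int d2 :: complex)"
    using b by (simp add: of_rat_rat)
  define A where "A = of_int (n1*d2) + of_int (n2*d1) * sqrtm7"
  have "x = A / of_int (d1*d2)"
    unfolding x ar br A_def using a(2) b(2) by (simp add: field_simps)
  moreover have "A \<in> OK" "d1*d2 > 0" unfolding A_def using a b by simp_all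
  ultimately show ?thesis by blast
qed


section \<open>Valuation at a prime element of \<open>O\<^sub>K\<close>\<close>

locale prime_place =
  fixes P :: complex
  assumes prime: "OK_prime P"
begin

abbreviation pdvd :: "complex \<Rightarrow> bool" where "pdvd x \<equiv> OK_dvd P x"

lemma P_OK [simp]: "P \<in> OK" and P_nonzero [simp]: "P \<noteq> 0"
  and P_not_unit: "\<not> (\<exists>u\<in>OK. P * u = 1)"
  using prime unfolding OK_prime_def by auto

lemma P_KK [simp]: "P \<in> KK"
  using OK_subset_KK by simp

lemma pdvd_mult_cases: "a \<in> OK \<Longrightarrow> b \<in> OK \<Longrightarrow> pdvd (a * b) \<Longrightarrow> pdvd a \<or> pdvd b"
  using prime unfolding OK_prime_def by auto

lemma not_pdvd_mult: "a \<in> OK \<Longrightarrow> b \<in> OK \<Longrightarrow> \<not> pdvd a \<Longrightarrow> \<not> pdvd b \<Longrightarrow> \<not> pdvd (a * b)"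
  using pdvd_mult_cases by blast

lemma not_pdvd_1 [simp]: "\<not> pdvd 1"
  using P_not_unit unfolding OK_dvd_def by metis

lemma pdvd_0 [simp]: "pdvd 0"
  unfolding OK_dvd_def by (rule bexI[of _ 0]) auto

lemma not_pdvd_nonzero: "\<not> pdvd a \<Longrightarrow> a \<noteq> 0"
  by auto

lemma pdvd_P_mult: "c \<in> OK \<Longrightarrow> pdvd (P * c)"
  unfolding OK_dvd_def by blast

lemma pdvd_uminus: "pdvd a \<Longrightarrow> pdvd (- a)"
  unfolding OK_dvd_def by (metis OK_uminus mult_minus_right)

lemma pdvd_diff: "pdvd a \<Longrightarrow> pdvd b \<Longrightarrow> pdvd (a - b)"
  unfolding OK_dvd_def by (metis OK_diff right_diff_distrib)

lemma norm_square_P_ge_2: "(cmod P)^2 \<ge> 2"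
proof -
  obtain n::int where n: "(cmod P)^2 = of_int n" using OK_norm_square_int[OF P_OK] by blast
  have "n \<ge> 1" using OK_norm_square_ge_1[OF P_OK P_nonzero] n by simp
  moreover have "n \<noteq> 1"
  proof
    assume "n = 1"
    then have "P * cnj P = 1" using n by (simp add: complex_norm_square[symmetric])
    then show False using P_not_unit cnj_OK[OF P_OK] by blast
  qed
  ultimately show ?thesis using n by simp
qed

text \<open>Each division by \<open>P\<close> at least halves the norm, so the descent terminates.\<close>

lemma OK_factor_P_power:
  assumes "x \<in> OK" "x \<noteq> 0"
  shows "\<exists>n c. c \<in> OK \<and> \<not> pdvd c \<and> x = P^n * c"
proof -
  obtain k where "(cmod x)^2 < 2^k" using real_arch_pow[of 2 "(cmod x)^2"] by auto
  with assms show ?thesis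
  proof (induction k arbitrary: x)
    case 0
    then show ?case using OK_norm_square_ge_1 by fastforce
  next
    case (Suc k)
    show ?case
    proof (cases "pdvd x")
      case False
      then show ?thesis using Suc.prems by (intro exI[of _ 0] exI[of _ x]) simp
    next
      case True
      then obtain c where c: "c \<in> OK" "x = P * c" unfolding OK_dvd_def by blast
      have "2 * (cmod c)^2 \<le> (cmod x)^2"
        using c norm_square_P_ge_2 by (simp add: norm_mult power_mult_distrib mult_right_mono)
      then have "(cmod c)^2 < 2^k" using Suc.prems by simp
      then obtain n c' where "c' \<in> OK" "\<not> pdvd c'" "c = P^n * c'"
        using Suc.IH c Suc.prems by fastforce
      then show ?thesis using c by (intro exI[of _ "Suc n"] exI[of _ c']) simp
    qed
  qed
qed

lemma P_powi_cancel_lt: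
  assumes "a \<in> OK" "b \<in> OK" "a' \<in> OK" "b' \<in> OK" "\<not> pdvd a" "\<not> pdvd b'"
    and eq: "P powi n * a * b' = P powi m * a' * b" and lt: "n < m"
  shows False
proof -
  have "P powi m = P powi n * P ^ nat (m - n)"
    using lt by (simp add: power_int_add[symmetric] flip: power_int_of_nat)
  then have "P powi n * (a * b') = P powi n * (P * (P ^ (nat (m - n) - 1) * a' * b))"
    using eq lt by (simp add: algebra_simps power_Suc[symmetric] Suc_nat_eq_nat_zadd1)
  then have "a * b' = P * (P ^ (nat (m - n) - 1) * a' * b)" by simp
  then have "pdvd (a * b')" using pdvd_P_mult assms by simp
  then show False using not_pdvd_mult assms by blast
qed

lemma kord_eqI:
  assumes "a \<in> OK" "b \<in> OK" "\<not> pdvd a" "\<not> pdvd b" "x * b = P powi n * a"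
  shows "kord P x = n"
  unfolding kord_def
proof (rule the_equality)
  show "\<exists>a\<in>OK. \<exists>b\<in>OK. \<not> pdvd a \<and> \<not> pdvd b \<and> x * b = P powi n * a" using assms by blast
next
  fix m assume "\<exists>a\<in>OK. \<exists>b\<in>OK. \<not> pdvd a \<and> \<not> pdvd b \<and> x * b = P powi m * a"
  then obtain a' b' where h: "a' \<in> OK" "b' \<in> OK" "\<not> pdvd a'" "\<not> pdvd b'" "x * b' = P powi m * a'"
    by blast
  have "P powi m * a' * b = P powi n * a * b'"
    using h(5) assms(5) by (metis mult.commute mult.left_commute)
  then show "m = n"
    using P_powi_cancel_lt[of a' b' a b m n] P_powi_cancel_lt[of a b a' b' n m] h assms
    by (metis linorder_neqE)
qed

lemma kord_spec:
  assumes "x \<in> KK" "x \<noteq> 0"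
  shows "\<exists>a\<in>OK. \<exists>b\<in>OK. \<not> pdvd a \<and> \<not> pdvd b \<and> x * b = P powi (kord P x) * a"
proof -
  obtain A m where A: "A \<in> OK" "m > 0" "x = A / of_int m" using KK_eq_OK_div_int[OF assms(1)] by blast
  have "A \<noteq> 0" using A assms by auto
  obtain i a where a: "a \<in> OK" "\<not> pdvd a" "A = P^i * a" using OK_factor_P_power[OF A(1) \<open>A \<noteq> 0\<close>] by blast
  obtain j b where b: "b \<in> OK" "\<not> pdvd b" "of_int m = P^j * b"
    using OK_factor_P_power[of "of_int m"] A(2) by auto
  have "x * b = P powi (int i - int j) * a"
    using A(3) a(3) b(3) not_pdvd_nonzero[OF b(2)] by (simp add: power_int_diff field_simps)
  then show ?thesis using a b kord_eqI by metis
qed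

lemma kord_unit: "u \<in> OK \<Longrightarrow> \<not> pdvd u \<Longrightarrow> kord P u = 0"
  using kord_eqI[of u 1 u 0] by simp

lemma kord_P [simp]: "kord P P = 1"
  using kord_eqI[of 1 1 P 1] by simp

lemma kord_mult:
  assumes "x \<in> KK" "y \<in> KK" "x \<noteq> 0" "y \<noteq> 0"
  shows "kord P (x * y) = kord P x + kord P y"
proof -
  obtain a b where ab: "a \<in> OK" "b \<in> OK" "\<not> pdvd a" "\<not> pdvd b" "x * b = P powi (kord P x) * a"
    using kord_spec assms by blast
  obtain a' b' where ab': "a' \<in> OK" "b' \<in> OK" "\<not> pdvd a'" "\<not> pdvd b'"
    "y * b' = P powi (kord P y) * a'"
    using kord_spec assms by blast
  have "(x * y) * (b * b') = P powi (kord P x + kord P y) * (a * a')"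
    using ab(5) ab'(5) by (simp add: power_int_add algebra_simps) (metis mult.assoc mult.commute)
  then show ?thesis using kord_eqI[of "a * a'" "b * b'"] not_pdvd_mult ab ab' by simp
qed

lemma kord_inverse: "x \<in> KK \<Longrightarrow> x \<noteq> 0 \<Longrightarrow> kord P (inverse x) = - kord P x"
  using kord_mult[of x "inverse x"] kord_unit[of 1] by simp

lemma kord_divide:
  "x \<in> KK \<Longrightarrow> y \<in> KK \<Longrightarrow> x \<noteq> 0 \<Longrightarrow> y \<noteq> 0 \<Longrightarrow> kord P (x / y) = kord P x - kord P y"
  using kord_mult[of x "inverse y"] kord_inverse[of y] by (simp add: divide_inverse)

lemma kord_power: "x \<in> KK \<Longrightarrow> x \<noteq> 0 \<Longrightarrow> kord P (x ^ n) = int n * kord P x"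
  by (induction n) (simp_all add: kord_mult kord_unit algebra_simps)

lemma kord_uminus: "x \<in> KK \<Longrightarrow> x \<noteq> 0 \<Longrightarrow> kord P (- x) = kord P x"
proof -
  assume "x \<in> KK" "x \<noteq> 0"
  have "\<not> pdvd (-1)" using pdvd_uminus[of "-1"] by auto
  then show ?thesis using kord_mult[of "-1" x] kord_unit[of "-1"] \<open>x \<in> KK\<close> \<open>x \<noteq> 0\<close> by simp
qed

text \<open>\<open>val_ge k x\<close> says \<open>ord\<^sub>P x \<ge> k\<close> (or \<open>x = 0\<close>); unlike \<open>vge\<close> it allows negative \<open>k\<close>.\<close>

definition val_ge :: "int \<Rightarrow> complex \<Rightarrow> bool" where
  "val_ge k x \<longleftrightarrow> (\<exists>a\<in>OK. \<exists>b\<in>OK. \<not> pdvd b \<and> x * b = P powi k * a)"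

lemma vge_eq_val_ge: "vge P N x = val_ge (int N) x"
  unfolding vge_def val_ge_def by simp

lemma val_ge_0 [simp]: "val_ge k 0"
  unfolding val_ge_def by (rule bexI[of _ 0], rule bexI[of _ 1]) auto

lemma val_ge_add: "val_ge k x \<Longrightarrow> val_ge k y \<Longrightarrow> val_ge k (x + y)"
  unfolding val_ge_def
proof (elim bexE conjE)
  fix a b a' b' assume h: "a \<in> OK" "b \<in> OK" "a' \<in> OK" "b' \<in> OK" "\<not> pdvd b" "\<not> pdvd b'"
    "x * b = P powi k * a" "y * b' = P powi k * a'"
  have "(x + y) * (b * b') = P powi k * (a * b' + a' * b)"
    using h(7,8) by (simp add: algebra_simps)
  moreover have "\<not> pdvd (b * b')" using not_pdvd_mult h by blast
  ultimately show "\<exists>a\<in>OK. \<exists>b\<in>OK. \<not> pdvd b \<and> (x + y) * b = P powi k * a"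
    using h by (intro bexI[of _ "a * b' + a' * b"] bexI[of _ "b * b'"]) auto
qed

lemma val_ge_uminus: "val_ge k x \<Longrightarrow> val_ge k (- x)"
  unfolding val_ge_def by (metis OK_uminus mult_minus_left mult_minus_right)

lemma val_ge_diff: "val_ge k x \<Longrightarrow> val_ge k y \<Longrightarrow> val_ge k (x - y)"
  using val_ge_add[of k x "-y"] val_ge_uminus[of k y] by simp

lemma val_ge_mult: "val_ge k x \<Longrightarrow> val_ge l y \<Longrightarrow> val_ge (k + l) (x * y)"
  unfolding val_ge_def
proof (elim bexE conjE)
  fix a b a' b' assume h: "a \<in> OK" "b \<in> OK" "a' \<in> OK" "b' \<in> OK" "\<not> pdvd b" "\<not> pdvd b'"
    "x * b = P powi k * a" "y * b' = P powi l * a'"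
  have "(x * y) * (b * b') = P powi (k + l) * (a * a')"
    using h(7,8) by (simp add: power_int_add algebra_simps) (metis mult.assoc mult.commute)
  moreover have "\<not> pdvd (b * b')" using not_pdvd_mult h by blast
  ultimately show "\<exists>a\<in>OK. \<exists>b\<in>OK. \<not> pdvd b \<and> (x * y) * b = P powi (k + l) * a"
    using h by (intro bexI[of _ "a * a'"] bexI[of _ "b * b'"]) auto
qed

lemma val_ge_mono: "val_ge k x \<Longrightarrow> l \<le> k \<Longrightarrow> val_ge l x"
  unfolding val_ge_def
proof (elim bexE conjE)
  fix a b assume h: "a \<in> OK" "b \<in> OK" "\<not> pdvd b" "x * b = P powi k * a" and lk: "l \<le> k"
  have "P powi k = P powi l * P ^ nat (k - l)"
    using lk by (simp add: power_int_add[symmetric] flip: power_int_of_nat)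
  then have "x * b = P powi l * (P ^ nat (k - l) * a)" using h by simp
  then show "\<exists>a\<in>OK. \<exists>b\<in>OK. \<not> pdvd b \<and> x * b = P powi l * a"
    using h by (intro bexI[of _ "P ^ nat (k - l) * a"] bexI[of _ b]) auto
qed

lemma val_ge_OK: "x \<in> OK \<Longrightarrow> val_ge 0 x"
  unfolding val_ge_def by (intro bexI[of _ x] bexI[of _ 1]) auto

lemma val_ge_P_powi: "val_ge k (P powi k)"
  unfolding val_ge_def by (intro bexI[of _ 1] bexI[of _ 1]) auto

lemma val_ge_iff:
  assumes x: "x \<in> KK"
  shows "val_ge k x \<longleftrightarrow> (x = 0 \<or> k \<le> kord P x)"
proof (cases "x = 0")
  case True then show ?thesis by simp
next
  case nz: False
  obtain a b where ab: "a \<in> OK" "b \<in> OK" "\<not> pdvd a" "\<not> pdvd b" "x * b = P powi (kord P x) * a"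
    using kord_spec[OF x nz] by blast
  show ?thesis
  proof
    assume "val_ge k x"
    then obtain a' b' where h: "a' \<in> OK" "b' \<in> OK" "\<not> pdvd b'" "x * b' = P powi k * a'"
      unfolding val_ge_def by blast
    have "a' \<noteq> 0" using h nz not_pdvd_nonzero[OF h(3)] by auto
    then obtain j c where c: "c \<in> OK" "\<not> pdvd c" "a' = P^j * c" using OK_factor_P_power h(1) by blast
    have "x * b' = P powi (k + int j) * c" using h(4) c(3) by (simp add: power_int_add)
    then have "kord P x = k + int j" using kord_eqI[OF c(1) h(2) c(2) h(3)] by simp
    then show "x = 0 \<or> k \<le> kord P x" by simp
  next
    assume "x = 0 \<or> k \<le> kord P x"
    then show "val_ge k x" using val_ge_mono[of "kord P x" x k] ab nz unfolding val_ge_def by blast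
  qed
qed

lemma val_ge_unit: "x \<in> KK \<Longrightarrow> kord P x = 0 \<Longrightarrow> val_ge 0 x"
  using val_ge_iff by simp

lemma kord_OK_nonneg: "x \<in> OK \<Longrightarrow> x \<noteq> 0 \<Longrightarrow> kord P x \<ge> 0"
  using val_ge_iff[of x 0] val_ge_OK OK_subset_KK by auto

lemma val_ge_divide:
  "x \<in> KK \<Longrightarrow> u \<in> KK \<Longrightarrow> u \<noteq> 0 \<Longrightarrow> val_ge k x \<Longrightarrow> val_ge (k - kord P u) (x / u)"
  using val_ge_iff[of x k] val_ge_iff[of "x/u" "k - kord P u"] kord_divide[of x u] by auto

lemma kord_add_lt:
  assumes "x \<in> KK" "y \<in> KK" "x \<noteq> 0" "y = 0 \<or> kord P x < kord P y"
  shows "x + y \<noteq> 0 \<and> kord P (x + y) = kord P x"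
proof (cases "y = 0")
  case True then show ?thesis using assms by simp
next
  case False
  then have lt: "kord P x < kord P y" using assms by simp
  have ne: "x + y \<noteq> 0"
  proof
    assume "x + y = 0" then have "y = - x" by (metis add_eq_0_iff)
    then show False using lt kord_uminus assms by simp
  qed
  have "val_ge (kord P x) x" "val_ge (kord P x) y" using val_ge_iff assms lt by auto
  then have "val_ge (kord P x) (x + y)" by (rule val_ge_add)
  then have ge: "kord P x \<le> kord P (x + y)" using val_ge_iff[of "x+y"] assms ne by simp
  have "\<not> kord P x < kord P (x + y)"
  proof
    assume l2: "kord P x < kord P (x + y)"
    have "val_ge (kord P x + 1) (x + y)" "val_ge (kord P x + 1) (- y)"
      using val_ge_iff[of "x+y"] val_ge_iff[of "-y"] assms l2 lt ne kord_uminus[of y] False by auto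
    then have "val_ge (kord P x + 1) (x + y + - y)" by (rule val_ge_add)
    then show False using val_ge_iff[of x] assms by simp
  qed
  then show ?thesis using ge ne by simp
qed

end


section \<open>\<open>P\<close>-adic sequences and Hensel's lemma for square roots\<close>

context prime_place
begin

lemma adic_cauchy_iff: "adic_cauchy P w \<longleftrightarrow> (\<forall>N. \<exists>M. \<forall>m\<ge>M. \<forall>n\<ge>M. val_ge (int N) (w m - w n))"
  unfolding adic_cauchy_def vge_eq_val_ge ..

lemma adic_null_iff: "adic_null P f \<longleftrightarrow> (\<forall>N. \<exists>M. \<forall>n\<ge>M. val_ge (int N) (f n))"
  unfolding adic_null_def vge_eq_val_ge ..

lemma adic_cauchy_const: "adic_cauchy P (\<lambda>n. c)"
  unfolding adic_cauchy_iff by simp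

lemma adic_null_zero: "adic_null P (\<lambda>n. 0)"
  unfolding adic_null_iff by simp

lemma val_ge_cmult:
  assumes "c \<in> KK" "val_ge (int N + \<bar>kord P c\<bar>) x"
  shows "val_ge (int N) (c * x)"
proof -
  have "val_ge (kord P c + (int N + \<bar>kord P c\<bar>)) (c * x)"
    using val_ge_mult[OF _ assms(2)] val_ge_iff[OF assms(1)] by auto
  then show ?thesis by (rule val_ge_mono) simp
qed

lemma adic_cauchy_cmult:
  assumes "adic_cauchy P w" "c \<in> KK"
  shows "adic_cauchy P (\<lambda>n. c * w n)"
  unfolding adic_cauchy_iff
proof
  fix N
  obtain M where "\<forall>m\<ge>M. \<forall>n\<ge>M. val_ge (int (N + nat \<bar>kord P c\<bar>)) (w m - w n)"
    using assms(1) unfolding adic_cauchy_iff by blast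
  then have "\<forall>m\<ge>M. \<forall>n\<ge>M. val_ge (int N) (c * w m - c * w n)"
    using val_ge_cmult[OF assms(2)] by (simp flip: right_diff_distrib)
  then show "\<exists>M. \<forall>m\<ge>M. \<forall>n\<ge>M. val_ge (int N) (c * w m - c * w n)" by blast
qed

lemma adic_null_cmult:
  assumes "adic_null P f" "c \<in> KK"
  shows "adic_null P (\<lambda>n. c * f n)"
  unfolding adic_null_iff
proof
  fix N
  obtain M where "\<forall>n\<ge>M. val_ge (int (N + nat \<bar>kord P c\<bar>)) (f n)"
    using assms(1) unfolding adic_null_iff by blast
  then have "\<forall>n\<ge>M. val_ge (int N) (c * f n)" using val_ge_cmult[OF assms(2)] by simp
  then show "\<exists>M. \<forall>n\<ge>M. val_ge (int N) (c * f n)" by blast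
qed

lemma adic_null_mult_bounded:
  assumes "adic_null P f" "\<And>n. val_ge 0 (g n)"
  shows "adic_null P (\<lambda>n. f n * g n)"
  using assms val_ge_mult[of "int _" _ 0] unfolding adic_null_iff by fastforce

lemma adic_cauchy_of_steps:
  assumes "\<And>n. val_ge (int n + 1) (x (Suc n) - x n)"
  shows "adic_cauchy P x"
proof -
  have from_N: "val_ge (int n) (x m - x n)" if "n \<le> m" for m n
    using that
  proof (induction m)
    case (Suc m)
    show ?case
    proof (cases "n = Suc m")
      case False
      then have "val_ge (int n) (x (Suc m) - x m)" "val_ge (int n) (x m - x n)"
        using Suc assms[of m] val_ge_mono by auto
      then show ?thesis using val_ge_add by fastforce
    qed simp
  qed simp
  have "val_ge (int N) (x m - x n)" if "N \<le> m" "N \<le> n" for N m n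
    using val_ge_diff[OF from_N from_N, OF that] by simp
  then show ?thesis unfolding adic_cauchy_iff by blast
qed

text \<open>One Newton step \<open>y \<mapsto> y - (y\<^sup>2 - c) / (2 y)\<close>: the error \<open>e\<close> becomes \<open>e\<^sup>2 / (4 y\<^sup>2)\<close>.\<close>

lemma hensel_step:
  assumes c: "c \<in> KK" and y: "y \<in> KK" "y \<noteq> 0" "kord P y = 0"
    and e: "val_ge m (y^2 - c)" and m: "m \<ge> 2 * kord P 2 + 1"
  defines "y' \<equiv> y - (y^2 - c) / (2 * y)"
  shows "y' \<in> KK" "y' \<noteq> 0" "kord P y' = 0" "val_ge (m + 1) (y'^2 - c)"
    and "val_ge (m - kord P 2) (y' - y)"
proof -
  define s where "s = kord P 2"
  have s0: "s \<ge> 0" using kord_OK_nonneg[of 2] s_def by simp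
  define e where "e = y^2 - c"
  have eK: "e \<in> KK" using y c e_def by simp
  have kord_2y2: "kord P (2 * y^2) = s" and kord_4y2: "kord P (4 * y^2) = 2 * s"
    using y kord_mult[of 2 "y^2"] kord_mult[of 2 "2 * y^2"] kord_power[of y 2] s_def by auto
  define t where "t = e / (2 * y^2)"
  have tK: "t \<in> KK" using eK y t_def by simp
  have tv: "val_ge (m - s) t"
    using val_ge_divide[OF eK _ _ e[folded e_def], of "2 * y^2"] y kord_2y2 t_def by simp
  then have "val_ge 1 (- t)" using m s0 s_def by (intro val_ge_uminus val_ge_mono[OF tv]) simp
  then have "1 + - t \<noteq> 0 \<and> kord P (1 + - t) = kord P 1"
    using kord_add_lt[of 1 "- t"] tK val_ge_iff[of "- t" 1] kord_unit[of 1] by auto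
  then have ot: "1 - t \<noteq> 0" "kord P (1 - t) = 0" using kord_unit[of 1] by simp_all
  have y'_eq: "y' = y * (1 - t)"
    using y(2) unfolding y'_def t_def e_def by (simp add: field_simps power2_eq_square)
  show "y' \<in> KK" "y' \<noteq> 0" "kord P y' = 0"
    using y'_eq y ot tK kord_mult[of y "1 - t"] by simp_all
  have "y'^2 - c = e^2 / (4 * y^2)"
    unfolding y'_def e_def using y(2) by (simp add: field_simps power2_eq_square)
  moreover have "val_ge (m + m - 2 * s) (e^2 / (4 * y^2))"
    using val_ge_divide[OF _ _ _ val_ge_mult[OF e e], of "4 * y^2"] eK y kord_4y2
    by (simp add: e_def power2_eq_square)
  ultimately show "val_ge (m + 1) (y'^2 - c)"
    using m s_def s0 val_ge_mono[of "m + m - 2 * s" _ "m + 1"] by simp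
  have "y' - y = - (y * t)" using y'_eq by (simp add: algebra_simps)
  moreover have "val_ge (0 + (m - s)) (y * t)" using val_ge_mult[OF val_ge_unit[OF y(1,3)] tv] .
  ultimately show "val_ge (m - kord P 2) (y' - y)" using val_ge_uminus s_def by simp
qed

lemma hensel_sqrt:
  assumes c: "c \<in> KK" and x0: "x0 \<in> KK" "x0 \<noteq> 0" "kord P x0 = 0"
    and e0: "val_ge m (x0^2 - c)" and m: "m \<ge> 2 * kord P 2 + 1"
  shows "\<exists>x. (\<forall>n. x n \<in> KK \<and> x n \<noteq> 0 \<and> kord P (x n) = 0) \<and> adic_cauchy P x
             \<and> adic_null P (\<lambda>n. x n ^ 2 - c)"
proof -
  have s0: "kord P 2 \<ge> 0" using kord_OK_nonneg[of 2] by simp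
  define x where "x = rec_nat x0 (\<lambda>n y. y - (y^2 - c) / (2 * y))"
  have x_Suc: "x (Suc n) = x n - (x n ^ 2 - c) / (2 * x n)" for n unfolding x_def by simp
  have inv: "x n \<in> KK \<and> x n \<noteq> 0 \<and> kord P (x n) = 0 \<and> val_ge (m + int n) (x n ^ 2 - c)" for n
  proof (induction n)
    case 0 then show ?case using x0 e0 unfolding x_def by simp
  next
    case (Suc n)
    then show ?case
      using hensel_step[OF c, of "x n" "m + int n"] m s0 unfolding x_Suc by (simp add: ac_simps)
  qed
  have "val_ge (int n + 1) (x (Suc n) - x n)" for n
  proof (rule val_ge_mono)
    show "val_ge (m + int n - kord P 2) (x (Suc n) - x n)"
      using hensel_step(5)[OF c, of "x n" "m + int n"] inv[of n] m unfolding x_Suc by simp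
  qed (use m s0 in simp)
  then have "adic_cauchy P x" by (rule adic_cauchy_of_steps)
  moreover have "val_ge (int N) (x n ^ 2 - c)" if "N \<le> n" for N n
    using inv[of n] m s0 that by (auto elim: val_ge_mono)
  then have "adic_null P (\<lambda>n. x n ^ 2 - c)" unfolding adic_null_iff by blast
  ultimately show ?thesis using inv by blast
qed

end


section \<open>The primes \<open>\<pi>\<^sub>2\<close>, \<open>\<pi>\<^sub>2'\<close> above \<open>2\<close>\<close>

lemma OK_dvd_pi2_iff: "OK_dvd pi2 (of_int a + of_int b * omega7) \<longleftrightarrow> even a"
proof
  assume "OK_dvd pi2 (of_int a + of_int b * omega7)"
  then obtain e f :: int
    where "of_int a + of_int b * omega7 = pi2 * (of_int e + of_int f * omega7)"
    unfolding OK_dvd_def by (metis OK_iff)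
  also have "\<dots> = - (of_int e * omega7 + of_int f * (omega7 * omega7))"
    unfolding pi2_eq by (simp add: algebra_simps)
  also have "\<dots> = of_int (2 * f) + of_int (- e - f) * omega7"
    unfolding omega7_mult_self by (simp add: algebra_simps)
  finally have "a = 2 * f" using OK_coeffs_unique by metis
  then show "even a" by simp
next
  assume "even a"
  then obtain f where f: "a = 2 * f" by blast
  have "pi2 * (of_int (- b - f) + of_int f * omega7)
      = - (of_int (- b - f) * omega7 + of_int f * (omega7 * omega7))"
    unfolding pi2_eq by (simp add: algebra_simps)
  also have "\<dots> = of_int a + of_int b * omega7"
    unfolding omega7_mult_self f by (simp add: algebra_simps)
  finally show "OK_dvd pi2 (of_int a + of_int b * omega7)"
    unfolding OK_dvd_def by (metis OK_add OK_of_int OK_mult OK_omega7)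
qed

lemma OK_dvd_pi2bar_iff: "OK_dvd pi2bar (of_int a + of_int b * omega7) \<longleftrightarrow> even (a + b)"
proof
  assume "OK_dvd pi2bar (of_int a + of_int b * omega7)"
  then obtain e f :: int
    where "of_int a + of_int b * omega7 = pi2bar * (of_int e + of_int f * omega7)"
    unfolding OK_dvd_def by (metis OK_iff)
  also have "\<dots> = of_int e * omega7 + of_int f * (omega7 * omega7) - of_int e - of_int f * omega7"
    unfolding pi2bar_eq by (simp add: algebra_simps)
  also have "\<dots> = of_int (- e - 2 * f) + of_int e * omega7"
    unfolding omega7_mult_self by (simp add: algebra_simps)
  finally have "a = - e - 2 * f \<and> b = e" using OK_coeffs_unique by metis
  then show "even (a + b)" by simp
next
  assume "even (a + b)"
  then obtain f where f: "a = 2 * f - b" by (metis add_diff_cancel_right' evenE)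
  have "pi2bar * (of_int b + of_int (- f) * omega7)
      = of_int b * omega7 + of_int (- f) * (omega7 * omega7) - of_int b - of_int (- f) * omega7"
    unfolding pi2bar_eq by (simp add: algebra_simps)
  also have "\<dots> = of_int a + of_int b * omega7"
    unfolding omega7_mult_self f by (simp add: algebra_simps)
  finally show "OK_dvd pi2bar (of_int a + of_int b * omega7)"
    unfolding OK_dvd_def by (metis OK_add OK_of_int OK_mult OK_omega7)
qed

text \<open>Both primes have residue field \<open>\<int>/2\<close>, so primality reduces to parity of coordinates.\<close>

lemma OK_prime_pi2: "OK_prime pi2"
  unfolding OK_prime_def
proof (intro conjI ballI impI)
  show "pi2 \<noteq> 0" using pi2_mult_pi2bar by auto
  show "\<not> (\<exists>u\<in>OK. pi2 * u = 1)"
    using OK_dvd_pi2_iff[of 1 0] unfolding OK_dvd_def by auto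
  fix x y assume "x \<in> OK" "y \<in> OK" "OK_dvd pi2 (x * y)"
  then obtain a b c d where xy: "x = of_int a + of_int b * omega7" "y = of_int c + of_int d * omega7"
    and "even (a*c - 2*b*d)"
    unfolding OK_iff by (metis OK_mult_coeffs OK_dvd_pi2_iff)
  then show "OK_dvd pi2 x \<or> OK_dvd pi2 y" unfolding xy OK_dvd_pi2_iff by simp
qed simp

lemma OK_prime_pi2bar: "OK_prime pi2bar"
  unfolding OK_prime_def
proof (intro conjI ballI impI)
  show "pi2bar \<noteq> 0" using pi2_mult_pi2bar by auto
  show "\<not> (\<exists>u\<in>OK. pi2bar * u = 1)"
    using OK_dvd_pi2bar_iff[of 1 0] unfolding OK_dvd_def by auto
  fix x y assume "x \<in> OK" "y \<in> OK" "OK_dvd pi2bar (x * y)"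
  then obtain a b c d where xy: "x = of_int a + of_int b * omega7" "y = of_int c + of_int d * omega7"
    and "even (a*c - 2*b*d + (a*d + b*c + b*d))"
    unfolding OK_iff by (metis OK_mult_coeffs OK_dvd_pi2bar_iff)
  moreover have "a*c - 2*b*d + (a*d + b*c + b*d) = (a + b) * (c + d) - 2 * (b * d)"
    by (simp add: algebra_simps)
  ultimately show "OK_dvd pi2bar x \<or> OK_dvd pi2bar y" unfolding xy OK_dvd_pi2bar_iff by simp
qed simp

lemma not_OK_dvd_pi2_pi2bar: "\<not> OK_dvd pi2 pi2bar"
  using OK_dvd_pi2_iff[of "-1" 1] unfolding pi2bar_eq by simp

lemma not_OK_dvd_pi2bar_pi2: "\<not> OK_dvd pi2bar pi2"
  using OK_dvd_pi2bar_iff[of 0 "-1"] unfolding pi2_eq by simp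

text \<open>A prime \<open>P\<close> with \<open>P Q = 2\<close> and \<open>P \<nmid> Q\<close>: a place of \<open>K\<close> above \<open>2\<close> with ramification index \<open>1\<close>.\<close>

locale dyadic_place = prime_place +
  fixes Q :: complex
  assumes Q_OK [simp]: "Q \<in> OK" and P_mult_Q: "P * Q = 2" and not_pdvd_Q: "\<not> pdvd Q"
begin

lemma kord_2: "kord P 2 = 1"
  using kord_eqI[of Q 1 2 1] not_pdvd_Q P_mult_Q by simp

lemma val_ge_of_int_pow2_dvd: "(2::int)^N dvd m \<Longrightarrow> val_ge (int N) (of_int m)"
proof -
  assume "(2::int)^N dvd m" then obtain k where k: "m = 2^N * k" by blast
  have "val_ge (int N + 0) ((P * Q)^N * of_int k)"
    unfolding power_mult_distrib mult.assoc
    by (rule val_ge_mult) (use val_ge_P_powi[of "int N"] val_ge_OK in auto)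
  then show ?thesis using k P_mult_Q by simp
qed

lemma not_pdvd_of_int_odd: "odd m \<Longrightarrow> \<not> pdvd (of_int m)"
proof
  assume "odd m" "pdvd (of_int m)"
  then obtain k where "m = 2 * k + 1" by (meson oddE)
  moreover have "pdvd (of_int (2 * k))"
    using pdvd_P_mult[of "Q * of_int k"] P_mult_Q by (simp add: mult.assoc[symmetric])
  ultimately have "pdvd (of_int m - of_int (2 * k))" using pdvd_diff \<open>pdvd (of_int m)\<close> by blast
  then show False using \<open>m = 2 * k + 1\<close> by simp
qed

lemma kord_of_int_odd: "odd m \<Longrightarrow> kord P (of_int m) = 0"
  using kord_unit not_pdvd_of_int_odd by simp

lemma kord_of_nat_odd: "odd (m::nat) \<Longrightarrow> kord P (of_nat m) = 0"
  using kord_of_int_odd[of "int m"] by simp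

end

interpretation pi2: dyadic_place pi2 pi2bar
  by unfold_locales (simp_all add: OK_prime_pi2 pi2_mult_pi2bar not_OK_dvd_pi2_pi2bar)

interpretation pi2bar: dyadic_place pi2bar pi2
  by unfold_locales (simp_all add: OK_prime_pi2bar pi2_mult_pi2bar mult.commute not_OK_dvd_pi2bar_pi2)


section \<open>Part (1): no local point at \<open>\<pi>\<^sub>2\<close> when \<open>ord\<^bsub>\<pi>\<^sub>2\<^esub> d\<close> is odd\<close>

lemma Cd_eq: "Cd p q d w z = d * w^2 - (d + of_nat p * z^2) * (d + of_nat q * z^2)"
  unfolding Cd_def by (simp add: algebra_simps power2_eq_square power4_eq_xxxx)

lemma KK_Cd [simp]: "d \<in> KK \<Longrightarrow> w \<in> KK \<Longrightarrow> z \<in> KK \<Longrightarrow> Cd p q d w z \<in> KK"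
  unfolding Cd_def by simp

lemma loc_solvI:
  assumes "\<And>n. w n \<in> KK" "\<And>n. z n \<in> KK" "adic_cauchy P w" "adic_cauchy P z"
    and "adic_null P (\<lambda>n. Cd p q d (w n) (z n))"
  shows "loc_solv P p q d"
  unfolding loc_solv_def using assms by blast

context prime_place
begin

lemma kord_add_odd_even:
  assumes "x \<in> KK" "y \<in> KK" "x \<noteq> 0" "y \<noteq> 0" "odd (kord P x)" "even (kord P y)"
  shows "x + y \<noteq> 0 \<and> kord P (x + y) = min (kord P x) (kord P y)"
proof -
  have "kord P x \<noteq> kord P y" using assms(5,6) by auto
  then consider "kord P x < kord P y" | "kord P y < kord P x" by linarith
  then show ?thesis
  proof cases
    case 1 then show ?thesis using kord_add_lt[of x y] assms by simp
  next
    case 2 then show ?thesis using kord_add_lt[of y x] assms by (simp add: add.commute)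
  qed
qed

end

context dyadic_place
begin

lemma kord_add_odd_square:
  assumes d: "d \<in> KK" "d \<noteq> 0" "odd (kord P d)" and Z: "Z \<in> KK" and r: "odd r"
  shows "d + of_nat r * Z^2 \<noteq> 0
    \<and> kord P (d + of_nat r * Z^2) = (if Z = 0 then kord P d else min (kord P d) (2 * kord P Z))"
proof (cases "Z = 0")
  case False
  have "of_nat r \<noteq> (0::complex)" using r by (auto intro: odd_pos)
  then have "kord P (of_nat r * Z^2) = 2 * kord P Z"
    using Z False kord_of_nat_odd[OF r] by (simp add: kord_mult kord_power)
  then show ?thesis
    using kord_add_odd_even[of d "of_nat r * Z^2"] d Z False \<open>of_nat r \<noteq> 0\<close> by simp
qed (use d in simp)

text \<open>Comparing valuations in \<open>d w\<^sup>2 = (d + p z\<^sup>2)(d + q z\<^sup>2)\<close>: the two factors have the same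
  valuation, so the right side has even valuation while the left side has odd valuation.\<close>

lemma not_loc_solv_odd_kord:
  assumes d: "d \<in> KK" "d \<noteq> 0" "odd (kord P d)" and pq: "odd p" "odd q"
  shows "\<not> loc_solv P p q d"
proof
  assume "loc_solv P p q d"
  then obtain w z where wz: "\<And>n. w n \<in> KK" "\<And>n. z n \<in> KK" "adic_null P (\<lambda>n. Cd p q d (w n) (z n))"
    unfolding loc_solv_def by blast
  define b where "b = kord P d"
  obtain n where n: "val_ge (int (nat (2 * b + 1))) (Cd p q d (w n) (z n))"
    using wz(3) unfolding adic_null_iff by blast
  define W Z where "W = w n" and "Z = z n"
  define X Y where "X = d + of_nat p * Z^2" and "Y = d + of_nat q * Z^2"
  define F where "F = Cd p q d W Z"
  have WZ: "W \<in> KK" "Z \<in> KK" using wz W_def Z_def by auto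
  have F: "F \<in> KK" "val_ge (2 * b + 1) F"
    using n WZ d val_ge_mono unfolding F_def W_def Z_def Cd_def by auto
  define v where "v = (if Z = 0 then b else min b (2 * kord P Z))"
  have "X \<noteq> 0" "kord P X = v" "Y \<noteq> 0" "kord P Y = v"
    using kord_add_odd_square[OF d WZ(2)] pq unfolding X_def Y_def v_def b_def by auto
  then have XY: "X * Y \<noteq> 0" "kord P (X * Y) = 2 * v" "X * Y \<in> KK"
    using kord_mult[of X Y] d WZ unfolding X_def Y_def by auto
  have "v \<le> b" unfolding v_def by simp
  then have "X * Y + F \<noteq> 0 \<and> kord P (X * Y + F) = 2 * v"
    using kord_add_lt[of "X * Y" F] XY F val_ge_iff[of F "2 * b + 1"] by auto
  moreover have "d * W^2 = X * Y + F" unfolding F_def Cd_eq X_def Y_def by simp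
  ultimately have "W \<noteq> 0" "kord P (d * W^2) = 2 * v" by auto
  moreover have "kord P (d * W^2) = b + 2 * kord P W" if "W \<noteq> 0"
    using kord_mult[of d "W^2"] kord_power[of W 2] d WZ that b_def by simp
  ultimately show False using d(3) b_def by presburger
qed

end


section \<open>Part (3): the curve \<open>C'\<^sub>-\<^sub>1\<close> at the dyadic places\<close>

lemma Cd_swap: "Cd q p d w z = Cd p q d w z"
  unfolding Cd_def by (simp add: algebra_simps)

lemma loc_solv_swap: "loc_solv P q p d \<Longrightarrow> loc_solv P p q d"
  unfolding loc_solv_def by (subst (asm) Cd_swap)

lemma Cd_minus_1: "Cd p q (-1) w z = - (w^2) - (1 - of_nat p * z^2) * (1 - of_nat q * z^2)"
  unfolding Cd_eq by (simp add: algebra_simps)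

context dyadic_place
begin

lemma hensel_sqrt_dyadic:
  assumes "c \<in> KK" "val_ge 3 (1 - c)"
  obtains x where "\<And>n. x n \<in> KK" "\<And>n. kord P (x n) = 0" "adic_cauchy P x"
    "adic_null P (\<lambda>n. x n ^ 2 - c)"
proof -
  have "val_ge 3 (1^2 - c)" "3 \<ge> 2 * kord P 2 + 1" using assms(2) kord_2 by simp_all
  then have "\<exists>x. (\<forall>n. x n \<in> KK \<and> x n \<noteq> 0 \<and> kord P (x n) = 0) \<and> adic_cauchy P x
      \<and> adic_null P (\<lambda>n. x n ^ 2 - c)"
    using hensel_sqrt[OF assms(1) KK_1 one_neq_zero kord_unit[OF OK_1 not_pdvd_1]] by blast
  then show thesis using that by blast
qed

text \<open>If \<open>r \<equiv> 1 (mod 8)\<close> then \<open>1/r\<close> is a square, giving the point \<open>(w, z) = (0, 1/\<surd>r)\<close>.\<close>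

lemma loc_solv_minus_1_mod_8_eq_1:
  assumes r: "r mod 8 = 1" and r': "odd r'"
  shows "loc_solv P r r' (-1)"
proof -
  have r0: "(of_nat r :: complex) \<noteq> 0" using r by auto
  have kr: "kord P (of_nat r) = 0" using r by (intro kord_of_nat_odd) presburger
  have "(8::int) dvd int r - 1" using r by presburger
  then have "(2::int)^3 dvd int r - 1" by simp
  then have "val_ge 3 (of_int (int r - 1))" using val_ge_of_int_pow2_dvd by fastforce
  then have "val_ge 3 ((of_nat r - 1) / of_nat r)"
    using val_ge_divide[of "of_nat r - 1" "of_nat r" 3] r0 kr by simp
  moreover have "(of_nat r - 1) / of_nat r = (1::complex) - 1 / of_nat r" using r0 by (simp add: field_simps)
  ultimately obtain z where z: "\<And>n. z n \<in> KK" "\<And>n. kord P (z n) = 0" "adic_cauchy P z"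
    "adic_null P (\<lambda>n. z n ^ 2 - 1 / of_nat r)"
    using hensel_sqrt_dyadic[of "1 / of_nat r"] by auto
  have "val_ge 0 (of_nat r * (1 - of_nat r' * z n ^ 2))" for n
  proof -
    have "val_ge (0 + 0) (z n * z n)" using val_ge_unit[OF z(1,2)] by (intro val_ge_mult)
    then have "val_ge (0 + (0 + 0)) (of_nat r' * (z n * z n))"
      by (rule val_ge_mult[OF val_ge_OK[OF OK_of_nat]])
    then have "val_ge 0 (1 - of_nat r' * z n ^ 2)"
      using val_ge_diff[OF val_ge_OK[OF OK_1]] by (simp add: power2_eq_square)
    then show ?thesis using val_ge_mult[OF val_ge_OK[OF OK_of_nat]] by fastforce
  qed
  then have "adic_null P (\<lambda>n. (z n ^ 2 - 1 / of_nat r) * (of_nat r * (1 - of_nat r' * z n ^ 2)))"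
    by (rule adic_null_mult_bounded[OF z(4)])
  moreover have "(z n ^ 2 - 1 / of_nat r) * (of_nat r * (1 - of_nat r' * z n ^ 2))
      = Cd r r' (-1) 0 (z n)" for n
    using r0 unfolding Cd_minus_1 by (simp add: field_simps)
  ultimately show ?thesis
    by (intro loc_solvI[of "\<lambda>n. 0" z]) (use z adic_cauchy_const in simp_all)
qed

text \<open>For \<open>p \<equiv> 3 (mod 8)\<close> take \<open>z = 1/4\<close>: then \<open>-256 F(w, 1/4) = (16 w)\<^sup>2 + (16 - p)(16 - q)\<close>,
  and \<open>-(16 - p)(16 - q) \<equiv> 1 (mod 8)\<close> is a square.\<close>

lemma loc_solv_minus_1_mod_8_eq_3:
  assumes p: "p mod 8 = 3" and q: "q = p + 2"
  shows "loc_solv P p q (-1)"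
proof -
  define c :: int where "c = - ((16 - int p) * (16 - int q))"
  define k where "k = int (p div 8)"
  have k: "int p = 8 * k + 3" unfolding k_def using p div_mult_mod_eq[of p 8] by linarith
  have "1 - c = 2^3 * (18 - 24 * k + 8 * k^2)"
    unfolding c_def using q k by (simp add: algebra_simps power2_eq_square)
  then have "(2::int)^3 dvd 1 - c" by (metis dvd_triv_left)
  then have "val_ge 3 (1 - of_int c)" using val_ge_of_int_pow2_dvd[of 3 "1 - c"] by simp
  then obtain y where y: "\<And>n. y n \<in> KK" "adic_cauchy P y" "adic_null P (\<lambda>n. y n ^ 2 - of_int c)"
    using hensel_sqrt_dyadic[OF KK_of_int] by blast
  have "adic_null P (\<lambda>n. (- 1/256) * (y n ^ 2 - of_int c))"
    by (rule adic_null_cmult[OF y(3)]) simp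
  moreover have "Cd p q (-1) ((1/16) * y n) (1/4) = (- 1/256) * (y n ^ 2 - of_int c)" for n
    unfolding Cd_minus_1 c_def using q by (simp add: field_simps power2_eq_square)
  moreover have "adic_cauchy P (\<lambda>n. (1/16) * y n)" by (rule adic_cauchy_cmult[OF y(2)]) simp
  ultimately show ?thesis
    by (intro loc_solvI[of "\<lambda>n. (1/16) * y n" "\<lambda>n. 1/4"]) (use y adic_cauchy_const in simp_all)
qed

lemma loc_solv_minus_1_dyadic:
  assumes "odd p" "q = p + 2" "p mod 8 \<noteq> 5"
  shows "loc_solv P p q (-1)"
proof -
  have "p mod 8 = 1 \<or> p mod 8 = 3 \<or> q mod 8 = 1" using assms by presburger
  then consider "p mod 8 = 1" | "p mod 8 = 3" | "q mod 8 = 1" by blast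
  then show ?thesis
  proof cases
    case 1
    moreover have "odd q" using assms(1,2) by simp
    ultimately show ?thesis by (rule loc_solv_minus_1_mod_8_eq_1)
  next
    case 2
    then show ?thesis using assms(2) by (rule loc_solv_minus_1_mod_8_eq_3)
  next
    case 3
    then have "loc_solv P q p (-1)" using assms(1) by (rule loc_solv_minus_1_mod_8_eq_1)
    then show ?thesis by (rule loc_solv_swap)
  qed
qed

end


context prime_place
begin

lemma kord_add_val_ge:
  assumes "x \<in> KK" "y \<in> KK" "x \<noteq> 0" "val_ge (kord P x + 1) y"
  shows "x + y \<noteq> 0 \<and> kord P (x + y) = kord P x"
  using kord_add_lt[of x y] assms val_ge_iff[of y] by auto

end

context dyadic_place
begin

lemma kord_pow2_mult_odd: "odd j \<Longrightarrow> kord P (2^k * of_int j) = int k"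
  using kord_mult[of "2^k" "of_int j"] kord_power[of 2 k] kord_2 kord_of_int_odd[of j]
  by (auto simp: odd_pos)

lemma odd_if_unit_approx:
  assumes "x \<in> KK" "x \<noteq> 0" "kord P x = 0" "val_ge 1 (x - of_int m)"
  shows "odd m"
proof
  assume "even m"
  then have "val_ge 1 (of_int m)" using val_ge_of_int_pow2_dvd[of 1 m] by simp
  then have "val_ge 1 (of_int m + (x - of_int m))" using assms(4) by (rule val_ge_add)
  then show False using val_ge_iff[of x 1] assms by simp
qed

end

text \<open>A dyadic place with residue field \<open>\<int>/2\<close>, i.e. \<open>K\<^sub>P = \<rat>\<^sub>2\<close>: \<open>\<int>\<close> is dense in \<open>O\<^sub>K\<close>.\<close>

locale split_dyadic_place = dyadic_place +
  assumes int_dense: "x \<in> OK \<Longrightarrow> \<exists>m::int. val_ge (int N) (x - of_int m)"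
begin

lemma int_dense_KK:
  assumes x: "x \<in> KK" "val_ge 0 x"
  shows "\<exists>m::int. val_ge (int N) (x - of_int m)"
proof -
  obtain a b where ab: "a \<in> OK" "b \<in> OK" "\<not> pdvd b" "x * b = a"
    using x(2) unfolding val_ge_def by auto
  have b: "b \<in> KK" "b \<noteq> 0" "kord P b = 0" using ab OK_subset_KK kord_unit by auto
  define N' where "N' = Suc N"
  obtain ma where ma: "val_ge (int N') (a - of_int ma)" using int_dense ab(1) by blast
  obtain mb where mb: "val_ge (int N') (b - of_int mb)" using int_dense ab(2) by blast
  have "odd mb" using odd_if_unit_approx[OF b] val_ge_mono[OF mb, of 1] N'_def by simp
  then obtain s where "[mb * s = 1] (mod 2 ^ N')" using cong_solve_coprime_int[of mb "2^N'"] by auto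
  then have "(2::int) ^ N' dvd 1 - mb * s" by (simp add: cong_iff_dvd_diff dvd_diff_commute)
  then have s: "val_ge (int N') (of_int (1 - mb * s))" by (rule val_ge_of_int_pow2_dvd)
  have "a - of_int (ma * s) * b
      = (a - of_int ma) - (of_int ma * of_int s) * (b - of_int mb) + of_int ma * of_int (1 - mb * s)"
    by (simp add: algebra_simps)
  also have "val_ge (int N') \<dots>"
    using val_ge_mult[OF val_ge_OK mb, of "of_int ma * of_int s"]
      val_ge_mult[OF val_ge_OK s, of "of_int ma"]
    by (intro val_ge_add val_ge_diff ma) simp_all
  finally have "val_ge (int N') ((a - of_int (ma * s) * b) / b)"
    using val_ge_divide[of "a - of_int (ma * s) * b" b] b ab OK_subset_KK by simp
  moreover have "(a - of_int (ma * s) * b) / b = x - of_int (ma * s)"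
    using ab(4) b by (simp add: field_simps)
  ultimately have "val_ge (int N') (x - of_int (ma * s))" by simp
  then have "val_ge (int N) (x - of_int (ma * s))" by (rule val_ge_mono) (simp add: N'_def)
  then show ?thesis by blast
qed

lemma unit_square_congr_1:
  assumes x: "x \<in> KK" "x \<noteq> 0" "kord P x = 0"
  shows "val_ge 3 (x^2 - 1)"
proof -
  obtain m where m: "val_ge 3 (x - of_int m)"
    using int_dense_KK[OF x(1) val_ge_unit[OF x(1,3)], of 3] by auto
  have "odd m" using odd_if_unit_approx[OF x] val_ge_mono[OF m] by simp
  then have "odd (nat \<bar>m\<bar>)" by (simp add: even_nat_iff)
  then have "[(nat \<bar>m\<bar>)^2 = 1] (mod 8)" by (rule square_mod_8_eq_1_iff[THEN iffD2])
  then have "[int ((nat \<bar>m\<bar>)^2) = int 1] (mod int 8)" by (simp only: cong_int_iff)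
  then have "(2::int)^3 dvd m^2 - 1" by (simp add: cong_iff_dvd_diff)
  then have "val_ge 3 (of_int (m^2 - 1))" using val_ge_of_int_pow2_dvd[of 3 "m^2 - 1"] by simp
  moreover have "val_ge (3 + 0) ((x - of_int m) * (x + of_int m))"
  proof (rule val_ge_mult[OF m])
    have "val_ge 0 ((x - of_int m) + 2 * of_int m)"
      using val_ge_mono[OF m] val_ge_OK[of "2 * of_int m"] by (intro val_ge_add) auto
    then show "val_ge 0 (x + of_int m)" by (simp add: algebra_simps)
  qed
  moreover have "(x - of_int m) * (x + of_int m) + of_int (m^2 - 1) = x^2 - 1"
    by (simp add: algebra_simps power2_eq_square)
  ultimately show ?thesis using val_ge_add[of 3] by (metis add_0_right)
qed

text \<open>Units of \<open>\<rat>\<^sub>2\<close> square to \<open>1\<close> mod \<open>8\<close>, so nothing is a square near \<open>-1\<close> or \<open>5\<close>.\<close>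

lemma not_square_near_1:
  assumes x: "x \<in> KK" and j: "odd j" and k: "k \<in> {1, 2}"
    and e: "val_ge (int k + 1) (x^2 - (1 + 2^k * of_int j))"
  shows False
proof -
  have c: "1 + 2^k * of_int j = (of_int (1 + 2^k * j) :: complex)" by simp
  have "odd (1 + 2^k * j)" using k by auto
  then have "kord P (1 + 2^k * of_int j) = 0" unfolding c by (rule kord_of_int_odd)
  moreover have "1 + 2^k * of_int j \<noteq> (0 :: complex)" unfolding c using \<open>odd (1 + 2^k * j)\<close>
    by (metis even_zero of_int_eq_0_iff)
  ultimately have "x^2 \<noteq> 0 \<and> kord P (x^2) = 0"
    using kord_add_val_ge[of "1 + 2^k * of_int j" "x^2 - (1 + 2^k * of_int j)"] x val_ge_mono[OF e] k
    by auto
  then have "val_ge 3 (x^2 - 1)" using unit_square_congr_1 kord_power[of x 2] x by auto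
  then have "val_ge (int k + 1) (x^2 - 1)" by (rule val_ge_mono) (use k in auto)
  then have "val_ge (int k + 1) ((x^2 - 1) - (x^2 - (1 + 2^k * of_int j)))"
    using e by (rule val_ge_diff)
  then have "val_ge (int k + 1) (2^k * of_int j)" by simp
  then show False
    using val_ge_iff[of "2^k * of_int j" "int k + 1"] kord_pow2_mult_odd[OF j, of k] j k
    by (auto simp: algebra_simps)
qed

end


context split_dyadic_place
begin

text \<open>A point with \<open>P | z\<close> would give \<open>w\<^sup>2 \<equiv> -1 (mod 4)\<close>.\<close>

lemma no_point_minus_1_integral:
  assumes WZ: "W \<in> KK" "Z \<in> KK" and F: "val_ge 2 (Cd p q (-1) W Z)" and Z: "val_ge 1 Z"
  shows False
proof -
  have Z2: "val_ge 2 (Z^2)" using val_ge_mult[OF Z Z] by (simp add: power2_eq_square)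
  have "val_ge (0 + 2) (of_nat (p + q) * Z^2)" "val_ge (0 + (2 + 2)) (of_nat (p * q) * (Z^2 * Z^2))"
    by (intro val_ge_mult val_ge_OK Z2 OK_of_nat)+
  then have "val_ge 2 (of_nat (p + q) * Z^2 - of_nat (p * q) * (Z^2 * Z^2) - Cd p q (-1) W Z)"
    using F val_ge_mono by (intro val_ge_diff) auto
  moreover have "of_nat (p + q) * Z^2 - of_nat (p * q) * (Z^2 * Z^2) - Cd p q (-1) W Z
      = W^2 - (1 + 2^1 * of_int (-1))"
    unfolding Cd_minus_1 by (simp add: algebra_simps power2_eq_square)
  ultimately show False using not_square_near_1[OF WZ(1), of "-1" 1] by simp
qed

text \<open>For a \<open>P\<close>-unit \<open>z\<close>, \<open>1 - p z\<^sup>2\<close> and \<open>1 - q z\<^sup>2\<close> have valuations \<open>2\<close> and \<open>1\<close>, so \<open>w\<^sup>2\<close> would have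
  valuation \<open>3\<close>.\<close>

lemma no_point_minus_1_unit:
  assumes p: "p mod 8 = 5" and q: "q = p + 2"
    and WZ: "W \<in> KK" "Z \<in> KK" "Z \<noteq> 0" "kord P Z = 0" and F: "val_ge 4 (Cd p q (-1) W Z)"
  shows False
proof -
  define k where "k = int (p div 8)"
  have k: "int p = 8 * k + 5" unfolding k_def using p div_mult_mod_eq[of p 8] by linarith
  define X Y where "X = 1 - of_nat p * Z^2" and "Y = 1 - of_nat q * Z^2"
  have Z2: "val_ge 3 (Z^2 - 1)" using unit_square_congr_1 WZ by blast
  have X: "X = 2^2 * of_int (- 2 * k - 1) + - (of_nat p * (Z^2 - 1))"
    unfolding X_def using arg_cong[OF k, of "of_int :: int \<Rightarrow> complex"] by (simp add: algebra_simps)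
  have Y: "Y = 2^1 * of_int (- 4 * k - 3) + - (of_nat q * (Z^2 - 1))"
    unfolding Y_def q using arg_cong[OF k, of "of_int :: int \<Rightarrow> complex"] by (simp add: algebra_simps)
  have small: "val_ge 3 (- (of_nat r * (Z^2 - 1)))" for r
    using val_ge_uminus[OF val_ge_mult[OF val_ge_OK[OF OK_of_nat] Z2]] by simp
  have odd: "odd (- 2 * k - 1)" "odd (- 4 * k - 3)" by presburger+
  have main: "2^i * of_int j + - (of_nat r * (Z^2 - 1)) \<noteq> 0
      \<and> kord P (2^i * of_int j + - (of_nat r * (Z^2 - 1))) = int i"
    if "odd j" "i \<le> 2" for i j r
  proof -
    have "2^i * of_int j \<noteq> (0::complex)" using \<open>odd j\<close> by auto
    moreover have "val_ge (int i + 1) (- (of_nat r * (Z^2 - 1)))"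
      using val_ge_mono[OF small] \<open>i \<le> 2\<close> by simp
    ultimately have "2^i * of_int j + - (of_nat r * (Z^2 - 1)) \<noteq> 0
      \<and> kord P (2^i * of_int j + - (of_nat r * (Z^2 - 1))) = kord P (2^i * of_int j)"
      using WZ(2) kord_pow2_mult_odd[OF \<open>odd j\<close>, of i] by (intro kord_add_val_ge) simp_all
    then show ?thesis using kord_pow2_mult_odd[OF \<open>odd j\<close>, of i] by simp
  qed
  have "X \<noteq> 0" "kord P X = 2" "Y \<noteq> 0" "kord P Y = 1"
    unfolding X Y using main[OF odd(1), of 2 p] main[OF odd(2), of 1 q] by simp_all
  then have XY: "- (X * Y) \<noteq> 0" "kord P (- (X * Y)) = 3" "- (X * Y) \<in> KK"
    using kord_mult[of X Y] kord_uminus[of "X * Y"] WZ unfolding X_def Y_def by auto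
  have "- (X * Y) + - Cd p q (-1) W Z \<noteq> 0
      \<and> kord P (- (X * Y) + - Cd p q (-1) W Z) = kord P (- (X * Y))"
    by (rule kord_add_val_ge) (use XY val_ge_uminus[OF F] WZ in simp_all)
  moreover have "W^2 = - (X * Y) + - Cd p q (-1) W Z" unfolding Cd_minus_1 X_def Y_def by simp
  ultimately have "W \<noteq> 0" "kord P (W^2) = 3" using XY(2) by auto
  then have "2 * kord P W = 3" using kord_power[of W 2] WZ by simp
  then show False by presburger
qed

text \<open>For \<open>ord z < 0\<close> the point \<open>(w/z\<^sup>2, 1/z)\<close> satisfies \<open>v\<^sup>2 \<equiv> -pq \<equiv> 5 (mod 8)\<close>.\<close>

lemma no_point_minus_1_nonintegral:
  assumes p: "p mod 8 = 5" and q: "q = p + 2"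
    and WZ: "W \<in> KK" "Z \<in> KK" "Z \<noteq> 0" "kord P Z < 0" and F: "val_ge 4 (Cd p q (-1) W Z)"
  shows False
proof -
  define k where "k = int (p div 8)"
  have k: "int p = 8 * k + 5" unfolding k_def using p div_mult_mod_eq[of p 8] by linarith
  define U where "U = 1 / Z"
  have U: "U \<in> KK" "U \<noteq> 0" "Z = 1 / U" using WZ U_def by auto
  have "val_ge 1 U" using val_ge_iff[OF U(1)] kord_inverse[of Z] WZ U_def by (simp add: divide_inverse)
  then have U2: "val_ge 2 (U^2)" using val_ge_mult by (fastforce simp: power2_eq_square)
  define V where "V = W * U^2"
  have "int (p + q) = 2^2 * (4 * k + 3)" using k q by simp
  then have "(2::int)^2 dvd int (p + q)" by (metis dvd_triv_left)
  then have "val_ge 2 (of_nat (p + q))" using val_ge_of_int_pow2_dvd[of 2 "int (p + q)"] by simp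
  then have "val_ge (2 + 2) (U^2 * (U^2 - of_nat (p + q)))"
    by (intro val_ge_mult[OF U2] val_ge_diff[OF U2])
  moreover have "int (p * q) + 5 = 2^3 * (8 * k^2 + 12 * k + 5)"
    using k q by (simp add: algebra_simps power2_eq_square)
  then have "(2::int)^3 dvd int (p * q) + 5" by (metis dvd_triv_left)
  then have "val_ge 3 (of_nat (p * q) + 5)" using val_ge_of_int_pow2_dvd[of 3 "int (p * q) + 5"] by simp
  moreover have "val_ge (4 + (2 + 2)) (Cd p q (-1) W Z * (U^2 * U^2))"
    by (intro val_ge_mult F U2)
  ultimately have v: "val_ge 3 (- (U^2 * (U^2 - of_nat (p + q))) - (of_nat (p * q) + 5)
      - Cd p q (-1) W Z * (U^2 * U^2))"
    using val_ge_mono by (intro val_ge_diff val_ge_uminus) (auto elim: val_ge_mono)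
  have eq: "- (U^2 * (U^2 - of_nat (p + q))) - (of_nat (p * q) + 5)
      - Cd p q (-1) W Z * (U^2 * U^2) = V^2 - (1 + 2^2 * of_int 1)"
    unfolding Cd_minus_1 V_def U(3) using U(2) by (simp add: field_simps power2_eq_square)
  have "V \<in> KK" using U WZ V_def by simp
  moreover from v have "val_ge (int 2 + 1) (V^2 - (1 + 2^2 * of_int 1))" unfolding eq by simp
  ultimately show False using not_square_near_1[of V 1 2] by simp
qed

lemma not_loc_solv_minus_1_mod_8_eq_5:
  assumes "p mod 8 = 5" "q = p + 2"
  shows "\<not> loc_solv P p q (-1)"
proof
  assume "loc_solv P p q (-1)"
  then obtain w z where wz: "\<And>n. w n \<in> KK" "\<And>n. z n \<in> KK"
    "adic_null P (\<lambda>n. Cd p q (-1) (w n) (z n))"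
    unfolding loc_solv_def by blast
  then obtain n where F: "val_ge 4 (Cd p q (-1) (w n) (z n))"
    unfolding adic_null_iff by (metis order_refl of_nat_numeral)
  consider "val_ge 1 (z n)" | "z n \<noteq> 0" "kord P (z n) = 0" | "z n \<noteq> 0" "kord P (z n) < 0"
    using val_ge_iff[OF wz(2)[of n], of 1] by linarith
  then show False
    using no_point_minus_1_integral[OF wz(1,2) val_ge_mono[OF F]]
      no_point_minus_1_unit[OF assms wz(1,2) _ _ F] no_point_minus_1_nonintegral[OF assms wz(1,2) _ _ F]
    by cases simp_all
qed

end


text \<open>\<open>\<pi>\<^sub>2 = -\<omega>\<close> is a root of \<open>X\<^sup>2 + X + 2\<close>, which has a \<open>2\<close>-adic root \<open>\<equiv> 0 (mod 2)\<close> by Hensel's lemma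
  over \<open>\<int>\<close>; hence \<open>\<pi>\<^sub>2\<close>, and with it all of \<open>O\<^sub>K = \<int>[\<pi>\<^sub>2]\<close>, is approximated by integers.\<close>

lemma exists_even_root_mod_pow2: "N \<ge> 1 \<Longrightarrow> \<exists>r::int. even r \<and> (2::int)^N dvd r^2 + r + 2"
proof (induction N rule: dec_induct)
  case base
  show ?case by (rule exI[of _ 0]) simp
next
  case (step N)
  then obtain r where r: "even r" "(2::int)^N dvd r^2 + r + 2" by blast
  then obtain k where k: "r^2 + r + 2 = 2^N * k" by blast
  show ?case
  proof (cases "even k")
    case True
    then obtain j where "k = 2 * j" by blast
    then have "r^2 + r + 2 = 2^Suc N * j" using k by simp
    then show ?thesis using r by (intro exI[of _ r]) simp
  next
    case False
    have "even (k + 2 * r + 1 + 2^N)" using False step(1) by simp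
    then obtain j where j: "k + 2 * r + 1 + 2^N = 2 * j" by blast
    have "(r + 2^N)^2 + (r + 2^N) + 2 = (r^2 + r + 2) + 2^N * (2 * r + 1 + 2^N)"
      by (simp add: algebra_simps power2_eq_square)
    also have "\<dots> = 2^N * (k + 2 * r + 1 + 2^N)" using k by (simp add: algebra_simps)
    also have "\<dots> = 2^Suc N * j" using j by simp
    finally show ?thesis using r step(1) by (intro exI[of _ "r + 2^N"]) simp
  qed
qed

lemma pi2_root: "pi2 * pi2 + pi2 + 2 = 0"
  unfolding pi2_eq using omega7_mult_self by (simp add: algebra_simps)

lemma pi2_approx_int: "\<exists>r::int. pi2.val_ge (int N) (pi2 - of_int r)"
proof -
  obtain r where r: "even r" "(2::int)^(N+1) dvd r^2 + r + 2"
    using exists_even_root_mod_pow2[of "N+1"] by auto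
  have "odd (r + 1)" using r by simp
  then have "of_int (r + 1) \<noteq> (0::complex)" by (metis even_zero of_int_eq_0_iff)
  have "of_int (r + 1) + pi2 \<noteq> 0 \<and> kord pi2 (of_int (r + 1) + pi2) = kord pi2 (of_int (r + 1))"
    by (rule pi2.kord_add_lt) (use \<open>of_int (r + 1) \<noteq> 0\<close> pi2.kord_of_int_odd[OF \<open>odd (r + 1)\<close>] in auto)
  then have u: "of_int (r + 1) + pi2 \<noteq> 0" "kord pi2 (of_int (r + 1) + pi2) = 0"
    using pi2.kord_of_int_odd[OF \<open>odd (r + 1)\<close>] by auto
  have "pi2.val_ge (int (N+1)) (- of_int (r^2 + r + 2))"
    using pi2.val_ge_of_int_pow2_dvd[OF r(2)] by (rule pi2.val_ge_uminus)
  then have "pi2.val_ge (int (N+1) - kord pi2 (of_int (r + 1) + pi2))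
      (- of_int (r^2 + r + 2) / (of_int (r + 1) + pi2))"
    by (rule pi2.val_ge_divide[OF _ _ u(1), rotated 2]) simp_all
  moreover have "- of_int (r^2 + r + 2) / (of_int (r + 1) + pi2) = pi2 - of_int r"
  proof -
    have "(pi2 - of_int r) * (of_int (r + 1) + pi2) = (pi2 * pi2 + pi2 + 2) - of_int (r^2 + r + 2)"
      by (simp add: algebra_simps power2_eq_square)
    then show ?thesis using pi2_root u(1) by (simp add: field_simps)
  qed
  ultimately have "pi2.val_ge (int (N+1)) (pi2 - of_int r)" using u(2) by simp
  then show ?thesis by (intro exI[of _ r]) (erule pi2.val_ge_mono, simp)
qed

lemma OK_approx_int_pi2: "x \<in> OK \<Longrightarrow> \<exists>m::int. pi2.val_ge (int N) (x - of_int m)"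
proof -
  assume "x \<in> OK"
  then obtain a b :: int where "x = of_int a + of_int b * omega7" unfolding OK_iff by blast
  then have x: "x = of_int a - of_int b * pi2" unfolding pi2_eq by simp
  obtain r where "pi2.val_ge (int N) (pi2 - of_int r)" using pi2_approx_int by blast
  then have "pi2.val_ge (0 + int N) (of_int (- b) * (pi2 - of_int r))"
    by (rule pi2.val_ge_mult[OF pi2.val_ge_OK, rotated]) simp
  moreover have "of_int (- b) * (pi2 - of_int r) = x - of_int (a - b * r)"
    unfolding x by (simp add: algebra_simps)
  ultimately show ?thesis by (intro exI[of _ "a - b * r"]) simp
qed

interpretation pi2: split_dyadic_place pi2 pi2bar
  by unfold_locales (rule OK_approx_int_pi2)


section \<open>Part (3): the curve \<open>C'\<^sub>-\<^sub>1\<close> at the inert primes\<close>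

lemma OK_dvd_of_nat_imp_dvd:
  assumes "OK_dvd (of_nat p) (of_int t + of_int e * sqrtm7)"
  shows "int p dvd 2 * t" "int p dvd 2 * e"
proof -
  obtain a b :: int where ab: "of_int t + of_int e * sqrtm7 = of_nat p * (of_int a + of_int b * omega7)"
    using assms unfolding OK_dvd_def by (metis OK_iff)
  have "real_of_int t = real p * (real_of_int a + real_of_int b / 2)"
    using arg_cong[OF ab, of Re] by simp
  then have "real_of_int (2 * t) = real_of_int (int p * (2 * a + b))" by (simp add: field_simps)
  then show "int p dvd 2 * t" by (simp only: of_int_eq_iff dvd_triv_left)
  have "real_of_int e * sqrt 7 = real p * (real_of_int b * sqrt 7 / 2)"
    using arg_cong[OF ab, of Im] by simp
  then have "real_of_int (2 * e) = real_of_int (int p * b)" by (simp add: field_simps)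
  then show "int p dvd 2 * e" by (simp only: of_int_eq_iff dvd_triv_left)
qed

text \<open>If \<open>y\<^sup>2 \<equiv> -7 (mod p)\<close>, the inert prime \<open>p\<close> would divide \<open>(y + \<surd>-7)(y - \<surd>-7)\<close> but neither factor.\<close>

lemma inert_not_QuadRes_minus_7:
  assumes "odd p" and inert: "OK_prime (of_nat p)"
  shows "\<not> QuadRes (int p) (-7)"
proof
  interpret prime_place "of_nat p" using inert by unfold_locales
  assume "QuadRes (int p) (-7)"
  then obtain y j where j: "y^2 + 7 = int p * j"
    unfolding QuadRes_def by (metis cong_iff_dvd_diff diff_minus_eq_add dvd_def cong_sym)
  have "(of_int y + of_int 1 * sqrtm7) * (of_int y + of_int (-1) * sqrtm7) = of_nat p * of_int j"
    using arg_cong[OF j, of "of_int :: int \<Rightarrow> complex"]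
    by (simp add: algebra_simps power2_eq_square sqrtm7_mult_self)
  then have "pdvd (of_int y + of_int 1 * sqrtm7) \<or> pdvd (of_int y + of_int (-1) * sqrtm7)"
    using pdvd_P_mult[of "of_int j"] by (intro pdvd_mult_cases) auto
  then have "int p dvd 2" using OK_dvd_of_nat_imp_dvd by fastforce
  then have "p \<le> 2" using zdvd_imp_le by fastforce
  then have "p = 1" using \<open>odd p\<close> by (cases p) auto
  then show False using P_not_unit by simp
qed

lemma inert_ne_7: "OK_prime (of_nat p) \<Longrightarrow> p \<noteq> 7"
proof
  assume "OK_prime (of_nat p)" "p = 7"
  moreover have "QuadRes 7 (-7)" unfolding QuadRes_def cong_def by (rule exI[of _ 0]) simp
  ultimately show False using inert_not_QuadRes_minus_7[of 7] by simp
qed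

lemma not_dvd_7: "p > 2 \<Longrightarrow> p \<noteq> 7 \<Longrightarrow> \<not> int p dvd 7"
proof
  assume "p > 2" "p \<noteq> 7" "int p dvd 7"
  then have "p dvd 7" by presburger
  then have "p \<in> {3, 4, 5, 6, 7}" using \<open>p > 2\<close> dvd_imp_le[of p 7] by auto
  then show False using \<open>p dvd 7\<close> \<open>p \<noteq> 7\<close> by auto
qed

lemma Legendre_eq_pm1: "prime p \<Longrightarrow> \<not> int p dvd a \<Longrightarrow> Legendre a (int p) \<in> {1, -1}"
  unfolding Legendre_def by (auto simp: cong_0_iff)

lemma pm1_cong_eq:
  assumes "a \<in> {1, -1}" "b \<in> {1, -1}" "[a = b] (mod int p)" "p > 2"
  shows "(a::int) = b"
proof (rule ccontr)
  assume "a \<noteq> b"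
  then have "int p dvd 2" using assms by (auto simp: cong_iff_dvd_diff)
  then show False using \<open>p > 2\<close> by (auto dest: zdvd_imp_le)
qed

text \<open>Euler's criterion gives \<open>(-7/p) = (-1/p)(7/p)\<close> and quadratic reciprocity gives
  \<open>(p/7) = (-1/p)(7/p)\<close>.\<close>

lemma not_QuadRes_minus_7_Legendre:
  assumes p: "prime p" "p > 2" "p \<noteq> 7" and nq: "\<not> QuadRes (int p) (-7)"
  shows "Legendre (-1) (int p) * Legendre 7 (int p) = -1" and "Legendre (int p) 7 = -1"
proof -
  define k where "k = (p - 1) div 2"
  have n7: "\<not> int p dvd 7" using not_dvd_7 p(2,3) .
  have L1: "Legendre (-1) (int p) \<in> {1, -1}" using Legendre_eq_pm1[OF p(1)] p(2) by (simp add: zdvd1_eq)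
  have L7: "Legendre 7 (int p) \<in> {1, -1}" using Legendre_eq_pm1[OF p(1) n7] .
  have "[Legendre (-7) (int p) = Legendre (-1) (int p) * Legendre 7 (int p)] (mod int p)"
  proof -
    have "[Legendre (-7) (int p) = (-1)^k * 7^k] (mod int p)"
      using euler_criterion[OF p(1,2), of "-7"] k_def by (simp flip: power_mult_distrib)
    moreover have "[Legendre (-1) (int p) * Legendre 7 (int p) = (-1)^k * 7^k] (mod int p)"
      using euler_criterion[OF p(1,2), of "-1"] euler_criterion[OF p(1,2), of 7] k_def
      by (intro cong_mult) simp_all
    ultimately show ?thesis by (metis cong_sym cong_trans)
  qed
  moreover have "Legendre (-7) (int p) = -1" using nq n7 unfolding Legendre_def by (simp add: cong_0_iff)
  moreover have "Legendre (-1) (int p) * Legendre 7 (int p) \<in> {1, -1}" using L1 L7 by auto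
  ultimately show prod: "Legendre (-1) (int p) * Legendre 7 (int p) = -1"
    using pm1_cong_eq[of "-1" "Legendre (-1) (int p) * Legendre 7 (int p)" p] p(2) by simp
  have "(-1::int)^k \<in> {1, -1}" by (cases "even k") auto
  then have "Legendre (-1) (int p) = (-1)^k"
    using pm1_cong_eq[OF L1 _ _ p(2)] euler_criterion[OF p(1,2), of "-1"] k_def by simp
  moreover have "Legendre (int p) 7 * Legendre 7 (int p) = ((-1::int)^k)^3"
    using Quadratic_Reciprocity[of p 7] p k_def by (simp add: power_mult)
  ultimately have "Legendre (int p) 7 * Legendre 7 (int p) = Legendre (-1) (int p)"
    by (cases "even k") auto
  then show "Legendre (int p) 7 = -1" using L7 prod by auto
qed

lemma not_QuadRes_minus_7_mod_7:
  assumes p: "prime p" "p > 2" "p \<noteq> 7" and nq: "\<not> QuadRes (int p) (-7)"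
  shows "p mod 7 \<in> {3, 5, 6}"
proof (rule ccontr)
  assume "p mod 7 \<notin> {3, 5, 6}"
  then have "p mod 7 \<in> {0, 1, 2, 4}" by auto
  then have "[int p = 0] (mod 7) \<or> QuadRes 7 (int p)"
  proof (elim insertE)
    assume "p mod 7 = 0"
    then have "[int p = 0] (mod 7)" by (simp add: cong_def) presburger
    then show ?thesis ..
  next
    assume "p mod 7 = 1"
    then have "[1^2 = int p] (mod 7)" by (simp add: cong_def) presburger
    then show ?thesis unfolding QuadRes_def by blast
  next
    assume "p mod 7 = 2"
    then have "[3^2 = int p] (mod 7)" by (simp add: cong_def) presburger
    then show ?thesis unfolding QuadRes_def by blast
  next
    assume "p mod 7 = 4"
    then have "[2^2 = int p] (mod 7)" by (simp add: cong_def) presburger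
    then show ?thesis unfolding QuadRes_def by blast
  qed simp
  then show False
    using not_QuadRes_minus_7_Legendre(2)[OF assms] unfolding Legendre_def by (auto split: if_splits)
qed

lemma inert_QuadRes_minus_1_or_7:
  assumes "prime p" "p > 2" "p \<noteq> 7" "\<not> QuadRes (int p) (-7)"
  shows "QuadRes (int p) (-1) \<or> QuadRes (int p) 7"
  using not_QuadRes_minus_7_Legendre(1)[OF assms] unfolding Legendre_def by (auto split: if_splits)


context prime_place
begin

lemma val_ge_P_mult: "c \<in> OK \<Longrightarrow> val_ge 1 (P * c)"
  unfolding val_ge_def by (intro bexI[of _ c] bexI[of _ 1]) auto

lemma loc_solv_minus_1_of_approx:
  assumes x0: "x0 \<in> KK" "x0 \<noteq> 0" "kord P x0 = 0" "val_ge 1 (x0^2 + 1)" and "kord P 2 = 0"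
  shows "loc_solv P p q (-1)"
proof -
  obtain w where w: "\<forall>n. w n \<in> KK \<and> w n \<noteq> 0 \<and> kord P (w n) = 0" "adic_cauchy P w"
    "adic_null P (\<lambda>n. w n ^ 2 - (-1))"
    using hensel_sqrt[of "-1" x0 1] assms by auto
  have "adic_null P (\<lambda>n. (-1) * (w n ^ 2 - (-1)))" by (rule adic_null_cmult[OF w(3)]) simp
  moreover have "(-1) * (w n ^ 2 - (-1)) = Cd p q (-1) (w n) 0" for n unfolding Cd_def by simp
  ultimately show ?thesis
    by (intro loc_solvI[of w "\<lambda>n. 0"]) (use w adic_cauchy_const in simp_all)
qed

end

locale inert_place =
  fixes p :: nat
  assumes prime_p: "prime p" and p_gt_2: "p > 2" and inert: "OK_prime (of_nat p)"

sublocale inert_place \<subseteq> prime_place "of_nat p"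
  by (rule prime_place.intro) (rule inert)

context inert_place
begin

lemma pdvd_of_int_imp_dvd: "pdvd (of_int m) \<Longrightarrow> int p dvd m"
proof -
  assume "pdvd (of_int m)"
  then have "int p dvd 2 * m" using OK_dvd_of_nat_imp_dvd(1)[of p m 0] by simp
  moreover have "\<not> int p dvd 2" using p_gt_2 by (auto dest: zdvd_imp_le)
  ultimately show ?thesis using prime_dvd_mult_iff[of "int p" 2 m] prime_p by auto
qed

lemma kord_of_int_not_dvd: "\<not> int p dvd m \<Longrightarrow> kord (of_nat p) (of_int m) = 0"
  using kord_unit[OF OK_of_int] pdvd_of_int_imp_dvd by blast

lemma val_ge_of_int_dvd: "int p dvd m \<Longrightarrow> val_ge 1 (of_int m)"
  using val_ge_P_mult[OF OK_of_int] by (auto elim!: dvdE)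

lemma approx_sqrt_minus_1_of_QuadRes_minus_1:
  assumes "QuadRes (int p) (-1)"
  shows "\<exists>x. x \<in> KK \<and> x \<noteq> 0 \<and> kord (of_nat p) x = 0 \<and> val_ge 1 (x^2 + 1)"
proof -
  obtain y where "[y^2 = -1] (mod int p)" using assms unfolding QuadRes_def by blast
  then have d: "int p dvd y^2 + 1" by (simp add: cong_iff_dvd_diff)
  have "\<not> int p dvd y"
  proof
    assume "int p dvd y"
    then have "int p dvd y^2" by (simp add: power2_eq_square)
    then have "int p dvd 1" using d by (simp add: dvd_add_right_iff)
    then show False using p_gt_2 by simp
  qed
  then show ?thesis
    using kord_of_int_not_dvd val_ge_of_int_dvd[OF d] by (intro exI[of _ "of_int y"]) auto
qed

text \<open>From \<open>t\<^sup>2 \<equiv> 7 (mod p)\<close>: \<open>x = t \<surd>-7 / 7\<close> has \<open>x\<^sup>2 + 1 = (7 - t\<^sup>2) / 7\<close>.\<close>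

lemma approx_sqrt_minus_1_of_QuadRes_7:
  assumes "QuadRes (int p) 7" "p \<noteq> 7"
  shows "\<exists>x. x \<in> KK \<and> x \<noteq> 0 \<and> kord (of_nat p) x = 0 \<and> val_ge 1 (x^2 + 1)"
proof -
  have n7: "\<not> int p dvd 7" using not_dvd_7 p_gt_2 assms(2) .
  obtain t where "[t^2 = 7] (mod int p)" using assms unfolding QuadRes_def by blast
  then have d: "int p dvd t^2 - 7" by (simp add: cong_iff_dvd_diff)
  have nt: "\<not> int p dvd t"
  proof
    assume "int p dvd t"
    then have "int p dvd t^2" by (simp add: power2_eq_square)
    then have "int p dvd t^2 - (t^2 - 7)" using d by (rule dvd_diff)
    then show False using n7 by simp
  qed
  define x where "x = of_int t * sqrtm7 / 7"
  have "kord (of_nat p) (sqrtm7 * sqrtm7) = 0"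
    using kord_of_int_not_dvd[of "-7"] n7 sqrtm7_mult_self by simp
  then have ks: "kord (of_nat p) sqrtm7 = 0" using kord_mult[of sqrtm7 sqrtm7] sqrtm7_nonzero by simp
  have "x \<in> KK" "x \<noteq> 0" using nt sqrtm7_nonzero unfolding x_def by auto
  moreover have "kord (of_nat p) x = 0"
    unfolding x_def using kord_divide[of "of_int t * sqrtm7" 7] kord_mult[of "of_int t" sqrtm7] ks
      kord_of_int_not_dvd[OF nt] kord_of_int_not_dvd[of 7] n7 sqrtm7_nonzero nt by auto
  moreover have "val_ge 1 (x^2 + 1)"
  proof -
    have eq: "x^2 + 1 = - of_int (t^2 - 7) / 7"
      using sqrtm7_mult_self unfolding x_def
      by (simp add: power_mult_distrib power2_eq_square[of sqrtm7] field_simps)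
    have "val_ge 1 (- of_int (t^2 - 7) / 7)"
      using val_ge_divide[of "- of_int (t^2 - 7)" 7 1] val_ge_uminus[OF val_ge_of_int_dvd[OF d]]
        kord_of_int_not_dvd[of 7] n7
      by simp
    then show ?thesis unfolding eq .
  qed
  ultimately show ?thesis by blast
qed

lemma loc_solv_minus_1:
  assumes "p \<noteq> 7" "QuadRes (int p) (-1) \<or> QuadRes (int p) 7"
  shows "loc_solv (of_nat p) p' q' (-1)"
proof -
  have "\<not> int p dvd 2" using p_gt_2 by (auto dest: zdvd_imp_le)
  then have "kord (of_nat p) (of_int 2) = 0" by (rule kord_of_int_not_dvd)
  then have "kord (of_nat p) 2 = 0" by simp
  moreover obtain x where "x \<in> KK" "x \<noteq> 0" "kord (of_nat p) x = 0" "val_ge 1 (x^2 + 1)"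
    using assms approx_sqrt_minus_1_of_QuadRes_minus_1 approx_sqrt_minus_1_of_QuadRes_7 by blast
  ultimately show ?thesis using loc_solv_minus_1_of_approx by blast
qed

end


section \<open>The Selmer group\<close>

lemma loc_solv_of_global_point:
  assumes "OK_prime P" "w \<in> KK" "z \<in> KK" "Cd p q d w z = 0"
  shows "loc_solv P p q d"
proof -
  interpret prime_place P using assms(1) by unfold_locales
  show ?thesis
    by (rule loc_solvI[of "\<lambda>n. w" "\<lambda>n. z"]) (use assms adic_cauchy_const adic_null_zero in simp_all)
qed

lemma KS2I: "(-1) ^ a * pi2 ^ b * pi2bar ^ c * of_nat p ^ e * of_nat q ^ f \<in> KS2 p q"
  unfolding KS2_def by blast

lemma KS2_KK:
  assumes "odd p" "odd q" "d \<in> KS2 p q"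
  shows "d \<in> KK" "d \<noteq> 0"
proof -
  obtain a b c e f where d: "d = (-1) ^ a * pi2 ^ b * pi2bar ^ c * of_nat p ^ e * of_nat q ^ f"
    using assms(3) unfolding KS2_def by blast
  show "d \<in> KK" unfolding d using OK_subset_KK[OF OK_pi2] OK_subset_KK[OF OK_pi2bar] by simp
  show "d \<noteq> 0" unfolding d using pi2_mult_pi2bar assms(1,2) by (auto simp: odd_pos)
qed

lemma not_in_Selmer_odd_kord:
  assumes "odd p" "odd q" "d \<in> KS2 p q" "odd (kord pi2 d) \<or> odd (kord pi2bar d)"
  shows "d \<notin> Selmer p q"
  using pi2.not_loc_solv_odd_kord[OF KS2_KK[OF assms(1-3)] _ assms(1,2)]
    pi2bar.not_loc_solv_odd_kord[OF KS2_KK[OF assms(1-3)] _ assms(1,2)] assms(4)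
  unfolding Selmer_def by blast

lemma in_Selmer_of_global_point:
  assumes "OK_prime (of_nat p)" "OK_prime (of_nat q)" "d \<in> KS2 p q"
    and "w \<in> KK" "z \<in> KK" "Cd p q d w z = 0"
  shows "d \<in> Selmer p q"
  unfolding Selmer_def arch_solv_def
  using assms OK_prime_pi2 OK_prime_pi2bar loc_solv_of_global_point[of _ w z p q d] by blast

lemma minus_p_in_Selmer:
  assumes "OK_prime (of_nat p)" "OK_prime (of_nat q)"
  shows "- of_nat p \<in> Selmer p q" "- of_nat q \<in> Selmer p q"
proof -
  have "- of_nat p \<in> KS2 p q" "- of_nat q \<in> KS2 p q"
    using KS2I[of 1 0 0 p 1 q 0] KS2I[of 1 0 0 p 0 q 1] by simp_all
  moreover have "Cd p q (- of_nat p) 0 1 = 0" "Cd p q (- of_nat q) 0 1 = 0"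
    unfolding Cd_def by (simp_all add: algebra_simps power2_eq_square)
  ultimately show "- of_nat p \<in> Selmer p q" "- of_nat q \<in> Selmer p q"
    using in_Selmer_of_global_point[OF assms, of _ 0 1] by simp_all
qed

text \<open>Inertness of \<open>p\<close> and \<open>q = p + 2\<close> forces \<open>p \<equiv> q \<equiv> 3, 5, 6 (mod 7)\<close>, hence \<open>p \<equiv> 3 (mod 7)\<close>;
  the condition \<open>p \<not>\<equiv> 5 (mod 8)\<close> then reads \<open>p \<equiv> 3, 17, 31 (mod 56)\<close>.\<close>

lemma twin_mod_7: "p mod 7 \<in> {3, 5, 6} \<Longrightarrow> (p + 2) mod 7 \<in> {3, 5, 6} \<Longrightarrow> (p::nat) mod 7 = 3"
  unfolding insert_iff empty_iff by presburger

lemma mod_56_iff_mod_8: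
  assumes "odd (p::nat)" "p mod 7 = 3"
  shows "p mod 56 \<in> {3, 17, 31} \<longleftrightarrow> p mod 8 \<noteq> 5"
proof -
  define r where "r = p mod 56"
  have r: "p mod 8 = r mod 8" "r mod 7 = 3" "odd r"
    unfolding r_def using assms by (simp_all add: mod_mod_cancel odd_iff_mod_2_eq_one)
  have "r div 7 < 8" unfolding r_def by simp
  then have "r div 7 \<in> {0, 1, 2, 3, 4, 5, 6, 7}" by auto
  moreover have "r = 7 * (r div 7) + 3" using r(2) div_mult_mod_eq[of r 7] by simp
  ultimately have "r \<in> {3, 10, 17, 24, 31, 38, 45, 52}" by auto
  then show ?thesis using r(1,3) unfolding r_def[symmetric] by auto
qed

lemma minus_1_in_Selmer_iff:
  assumes p: "prime p" "odd p" "OK_prime (of_nat p)" and q: "prime q" "q = p + 2" "OK_prime (of_nat q)"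
  shows "-1 \<in> Selmer p q \<longleftrightarrow> p mod 56 \<in> {3, 17, 31}"
proof -
  have "p > 2" "q > 2" using p(1,2) q(2) prime_ge_2_nat[of p] by (auto simp: le_less)
  have np: "p \<noteq> 7" "\<not> QuadRes (int p) (-7)"
    using inert_ne_7[OF p(3)] inert_not_QuadRes_minus_7[OF p(2,3)] by auto
  have "odd q" using p(2) q(2) by simp
  then have nq: "q \<noteq> 7" "\<not> QuadRes (int q) (-7)"
    using inert_ne_7[OF q(3)] inert_not_QuadRes_minus_7[OF _ q(3)] by auto
  have "p mod 7 = 3"
    using twin_mod_7 not_QuadRes_minus_7_mod_7[OF p(1) \<open>p > 2\<close> np] 
      not_QuadRes_minus_7_mod_7[OF q(1) \<open>q > 2\<close> nq] q(2) by blast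
  then have iff: "p mod 56 \<in> {3, 17, 31} \<longleftrightarrow> p mod 8 \<noteq> 5"
    using mod_56_iff_mod_8 p(2) by blast
  have "-1 \<in> KS2 p q" using KS2I[of 1 0 0 p 0 q 0] by simp
  moreover have "arch_solv p q (-1)"
    unfolding arch_solv_def by (intro exI[of _ \<i>] exI[of _ 0]) (simp add: Cd_def)
  moreover have "inert_place p" "inert_place q"
    using p q \<open>p > 2\<close> \<open>q > 2\<close> unfolding inert_place_def by blast+
  then have "loc_solv (of_nat p) p q (-1)" "loc_solv (of_nat q) p q (-1)"
    using inert_place.loc_solv_minus_1 inert_QuadRes_minus_1_or_7 p q \<open>p > 2\<close> \<open>q > 2\<close> np nq by blast+
  ultimately have "-1 \<in> Selmer p q \<longleftrightarrow> loc_solv pi2 p q (-1) \<and> loc_solv pi2bar p q (-1)"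
    unfolding Selmer_def by blast
  also have "\<dots> \<longleftrightarrow> p mod 8 \<noteq> 5"
    using pi2.loc_solv_minus_1_dyadic pi2bar.loc_solv_minus_1_dyadic
      pi2.not_loc_solv_minus_1_mod_8_eq_5 p(2) q(2) by blast
  finally show ?thesis using iff by simp
qed

theorem proposition2p2:
  fixes p q :: nat
  assumes "prime p" and "prime q" and "odd p" and "odd q" and "q = p + 2"
    and "inert_in_K p" and "inert_in_K q"
  shows "(\<forall>d\<in>KS2 p q. (odd (kord pi2 d) \<or> odd (kord pi2bar d)) \<longrightarrow> d \<notin> Selmer p q)
       \<and> - of_nat p \<in> Selmer p q \<and> - of_nat q \<in> Selmer p q
       \<and> (-1 \<in> Selmer p q \<longleftrightarrow> p mod 56 \<in> {3, 17, 31})"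
proof -
  have inert: "OK_prime (of_nat p)" "OK_prime (of_nat q)"
    using assms(6,7) unfolding inert_in_K_def by auto
  show ?thesis
    using not_in_Selmer_odd_kord[OF assms(3,4)] minus_p_in_Selmer[OF inert]
      minus_1_in_Selmer_iff[OF assms(1,3) inert(1) assms(2,5) inert(2)] by blast
qed

end
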